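(* Suppose (i) the prior satisfies $\pi_0(\theta^* )>0$, and (ii) (combinational identifiability) along the closed-loop trajectory there exists a collection of subsequences $\{(x^m_k,u^m_k)\}_{k\ge1}$, $m\in\mathcal{M}\subseteq\mathbb{N}$, of $(x_k,u_k)$, each converging to a limit context $\eta_m=(x^m_\infty,u^m_\infty)$, such that the combination of the blind regions of the models $\mathcal{P}(\eta_m)$ is empty, i.e. $\mathcal{BR}(\eta_1)\oplus\mathcal{BR}(\eta_2)\oplus\cdots=\emptyset$. Then the posterior $\pi_k$ converges to the point mass $\delta_{\theta^*}$, i.e. $\lim_{k\to\infty}\pi_k(\theta)=\mathbf{1}\{\theta=\theta^*\}$ for every $\theta\in\Theta$, with probability 1.
   Context: System: $x_{k+1}=f(x_k,u_k,w_k,\theta)$ with $x_k\in\mathcal{X}$, $u_k\in\mathcal{U}$ (nonempty Borel spaces), $w_k$ i.i.d. disturbances with a probability density, and $f$ Borel measurable. The parameter set $\Theta=\{\theta_1,\theta_2,\dots\}$ is countably infinite; the data are generated by the true parameter $\theta^*\in\Theta$, and each $u_k$ is a measurable function of the past observations $(x_0,\dots,x_k,u_0,\dots,u_{k-1})$. The transition kernel $q(x';\theta,x,u)$ is the density of $x_{k+1}$ given $x_k=x,u_k=u$ and parameter $\theta$; it is assumed continuously differentiable, strictly positive, with bounded first derivative in $x'$. Given a prior $\pi_0$ on $\Theta$, the posterior is updated by $\pi_k(\theta)=\dfrac{q(x_k;\theta,x_{k-1},u_{k-1})\,\pi_{k-1}(\theta)}{\sum_{\theta'\in\Theta}q(x_k;\theta',x_{k-1},u_{k-1})\pi_{k-1}(\theta')}$.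 A context is $\eta=(x,u)$ and $\mathcal{P}(\eta)=\{q(\cdot;\theta,x,u):\theta\in\Theta\}$. Elements of $\mathcal{D}\subseteq\Theta$ are \emph{observationally non-distinguishable} from $\{\mathcal{P}(\eta_m),m\in\mathcal{M}\}$ if there exist scalars $c_i\neq0$ (one per $\theta_i\in\mathcal{D}$) with $\sum_{\theta_i\in\mathcal{D}}c_i q(\cdot;\theta_i,\eta_m)=0$ for all $m\in\mathcal{M}$; otherwise \emph{observationally distinguishable}. A \emph{blind zone} of $\{\mathcal{P}(\eta_m),m\in\mathcal{M}\}$ is a set $\mathcal{BZ}\subseteq\Theta$ with at least two elements whose elements are observationally non-distinguishable from it and such that for every $\theta\notin\mathcal{BZ}$ the elements of $\mathcal{BZ}\cup\{\theta\}$ are observationally distinguishable from it. The \emph{blind region} of a collection of models is the union of all its blind zones. For a collection of contexts $\{\eta_m,m\in\mathcal{M}\}$, $\mathcal{BR}(\eta_1)\oplus\mathcal{BR}(\eta_2)\oplus\cdots$ denotes the blind region of the whole collection $\{\mathcal{P}(\eta_m),m\in\mathcal{M}\}$. *)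

theory Defs
  imports "HOL-Probability.Probability"
begin

text \<open>A transition kernel is represented as q th x u x' = q(x'; th, x, u).
  A context is a pair (x,u). A collection of models {P(eta_m), m in M} is
  represented by the set of its contexts C.\<close>

definition obs_nondist ::
  "('th \<Rightarrow> 'x \<Rightarrow> 'u \<Rightarrow> 'x \<Rightarrow> real) \<Rightarrow> ('x \<times> 'u) set \<Rightarrow> 'th set \<Rightarrow> bool" where
  "obs_nondist q C D \<longleftrightarrow>
     (\<exists>c :: 'th \<Rightarrow> real. (\<forall>th\<in>D. c th \<noteq> 0) \<and>
        (\<forall>eta\<in>C. \<forall>x'. ((\<lambda>th. c th * q th (fst eta) (snd eta) x') has_sum 0) D))"

definition blind_zone ::
  "('th \<Rightarrow> 'x \<Rightarrow> 'u \<Rightarrow> 'x \<Rightarrow> real) \<Rightarrow> ('x \<times> 'u) set \<Rightarrow> 'th set \<Rightarrow> bool" where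
  "blind_zone q C B \<longleftrightarrow>
     (\<exists>a\<in>B. \<exists>b\<in>B. a \<noteq> b) \<and> obs_nondist q C B \<and>
     (\<forall>th. th \<notin> B \<longrightarrow> \<not> obs_nondist q C (insert th B))"

definition blind_region ::
  "('th \<Rightarrow> 'x \<Rightarrow> 'u \<Rightarrow> 'x \<Rightarrow> real) \<Rightarrow> ('x \<times> 'u) set \<Rightarrow> 'th set" where
  "blind_region q C = \<Union>{B. blind_zone q C B}"

fun posterior ::
  "('th \<Rightarrow> real) \<Rightarrow> ('th \<Rightarrow> 'x \<Rightarrow> 'u \<Rightarrow> 'x \<Rightarrow> real) \<Rightarrow> (nat \<Rightarrow> 'x) \<Rightarrow> (nat \<Rightarrow> 'u)
     \<Rightarrow> nat \<Rightarrow> 'th \<Rightarrow> real" where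
  "posterior pi0 q xs us 0 th = pi0 th"
| "posterior pi0 q xs us (Suc k) th =
     q th (xs k) (us k) (xs (Suc k)) * posterior pi0 q xs us k th /
     (\<Sum>\<^sub>\<infinity>th'. q th' (xs k) (us k) (xs (Suc k)) * posterior pi0 q xs us k th')"

end

theory Submission
  imports Defs
begin

text \<open>
  Let L k t be the likelihood ratio of t against th_star after k steps, so that the posterior
  is pi0 t * L k t / (\<Sum>t'. pi0 t' * L k t'). Under th_star every L k t is a nonnegative
  martingale, and so is every prior mixture of them. By Ville's maximal inequality, the
  mixtures over all but finitely many parameters are small uniformly in time, almost surely,
  since their means are prior tail masses. It therefore suffices that L k t \<longrightarrow> 0 for each
  t \<noteq> th_star.

  If the blind region is empty, t differs from th_star at some limit context eta m, since
  otherwise the parameters agreeing with th_star on all limit contexts would form a blind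
  zone. Write L k t = (P k * \<Prod>i<k. BC i)^2, where BC i \<le> 1 is the Bhattacharyya
  coefficient of q t and q th_star at the context (x i, u i) and P is a nonnegative martingale,
  hence almost surely bounded. By lower semicontinuity of the Hellinger distance, BC i stays
  below some \<rho> < 1 along the subsequence converging to eta m, so the product tends to 0.
\<close>

section \<open>Nonnegative martingales and Ville's inequality\<close>

text \<open>The martingale property is stated through integrals over the events of F k, which avoids
  conditional expectations of extended nonnegative reals.\<close>

definition nn_martingale :: "'a measure \<Rightarrow> (nat \<Rightarrow> 'a measure) \<Rightarrow> (nat \<Rightarrow> 'a \<Rightarrow> ennreal) \<Rightarrow> bool" where
  "nn_martingale M F N \<longleftrightarrow>
     (\<forall>k. subalgebra M (F k) \<and> sets (F k) \<subseteq> sets (F (Suc k)) \<and> N k \<in> borel_measurable (F k)) \<and>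
     (\<forall>k A. A \<in> sets (F k) \<longrightarrow>
        (\<integral>\<^sup>+\<omega>. N (Suc k) \<omega> * indicator A \<omega> \<partial>M) = (\<integral>\<^sup>+\<omega>. N k \<omega> * indicator A \<omega> \<partial>M))"

context
  fixes M :: "'a measure" and F :: "nat \<Rightarrow> 'a measure" and N :: "nat \<Rightarrow> 'a \<Rightarrow> ennreal"
  assumes mart: "nn_martingale M F N"
begin

lemma nn_martingale_subalgebra: "subalgebra M (F k)"
  using mart by (simp add: nn_martingale_def)

lemma nn_martingale_sets_mono: "j \<le> n \<Longrightarrow> sets (F j) \<subseteq> sets (F n)"
  by (induction n rule: dec_induct) (use mart in \<open>auto simp: nn_martingale_def\<close>)

lemma nn_martingale_measurable_le:
  assumes "i \<le> j"
  shows "N i \<in> borel_measurable (F j)"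
proof -
  have "space (F i) = space (F j)"
    using nn_martingale_subalgebra[of i] nn_martingale_subalgebra[of j] by (simp add: subalgebra_def)
  moreover have "N i \<in> borel_measurable (F i)"
    using mart by (simp add: nn_martingale_def)
  ultimately show ?thesis
    using measurable_mono[OF order_refl refl nn_martingale_sets_mono[OF assms]] by blast
qed

lemma nn_martingale_measurable [measurable]: "N i \<in> borel_measurable M"
  using mart nn_martingale_subalgebra by (auto simp: nn_martingale_def intro: measurable_from_subalg)

lemma nn_martingale_nn_integral_indicator:
  assumes "j \<le> n" "A \<in> sets (F j)"
  shows "(\<integral>\<^sup>+\<omega>. N n \<omega> * indicator A \<omega> \<partial>M) = (\<integral>\<^sup>+\<omega>. N j \<omega> * indicator A \<omega> \<partial>M)"
  using assms(1)
proof (induction n rule: dec_induct)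
  case (step n)
  then show ?case
    using mart assms(2) nn_martingale_sets_mono[of j n] by (auto simp: nn_martingale_def)
qed simp

lemma nn_martingale_nn_integral: "(\<integral>\<^sup>+\<omega>. N n \<omega> \<partial>M) = (\<integral>\<^sup>+\<omega>. N 0 \<omega> \<partial>M)"
proof -
  have "space M \<in> sets (F 0)"
    using nn_martingale_subalgebra[of 0] sets.top[of "F 0"] by (simp add: subalgebra_def)
  then have "(\<integral>\<^sup>+\<omega>. N n \<omega> * indicator (space M) \<omega> \<partial>M) = (\<integral>\<^sup>+\<omega>. N 0 \<omega> * indicator (space M) \<omega> \<partial>M)"
    by (intro nn_martingale_nn_integral_indicator) auto
  moreover have "(\<integral>\<^sup>+\<omega>. N i \<omega> * indicator (space M) \<omega> \<partial>M) = (\<integral>\<^sup>+\<omega>. N i \<omega> \<partial>M)" for i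
    by (intro nn_integral_cong) simp
  ultimately show ?thesis by simp
qed

lemma ville_inequality_finite_horizon:
  "c * emeasure M {\<omega>\<in>space M. \<exists>k\<le>n. c \<le> N k \<omega>} \<le> (\<integral>\<^sup>+\<omega>. N 0 \<omega> \<partial>M)"
proof -
  have sets_F: "sets (F k) \<subseteq> sets M" for k
    using nn_martingale_subalgebra[of k] by (simp add: subalgebra_def)
  have space_F: "space (F k) = space M" for k
    using nn_martingale_subalgebra[of k] by (simp add: subalgebra_def)
  \<comment> \<open>decomposition according to the first time j at which N j reaches c\<close>
  define B where "B j = {\<omega>\<in>space M. c \<le> N j \<omega> \<and> (\<forall>i<j. N i \<omega> < c)}" for j
  have B_F: "B j \<in> sets (F j)" for j
  proof -
    have "B j = {\<omega>\<in>space (F j). c \<le> N j \<omega>} \<inter> (\<Inter>i<j. {\<omega>\<in>space (F j). N i \<omega> < c}) \<inter> space (F j)"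
      unfolding B_def space_F by auto
    also have "\<dots> \<in> sets (F j)"
      using nn_martingale_measurable_le by (cases "j = 0") (auto intro!: sets.Int sets.finite_INT)
    finally show ?thesis .
  qed
  then have B_M [measurable]: "B j \<in> sets M" for j
    using sets_F by blast
  have B_disj: "disjoint_family B"
    unfolding disjoint_family_on_def B_def
  proof (intro ballI impI)
    fix i j :: nat assume "i \<noteq> j"
    then show "{\<omega>\<in>space M. c \<le> N i \<omega> \<and> (\<forall>l<i. N l \<omega> < c)} \<inter> {\<omega>\<in>space M. c \<le> N j \<omega> \<and> (\<forall>l<j. N l \<omega> < c)} = {}"
      by (cases i j rule: linorder_cases) (auto simp: not_less[symmetric])
  qed
  have reach_eq: "{\<omega>\<in>space M. \<exists>k\<le>n. c \<le> N k \<omega>} = (\<Union>j\<le>n. B j)" for n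
  proof safe
    fix \<omega> k assume \<omega>: "\<omega> \<in> space M" "k \<le> n" "c \<le> N k \<omega>"
    define j where "j = (LEAST j. c \<le> N j \<omega>)"
    have "c \<le> N j \<omega>" "j \<le> k"
      unfolding j_def using \<omega>(3) by (rule LeastI, rule Least_le)
    moreover have "\<forall>i<j. N i \<omega> < c"
      unfolding j_def using not_less_Least[of _ "\<lambda>j. c \<le> N j \<omega>"] by (auto simp: not_le)
    ultimately show "\<omega> \<in> (\<Union>j\<le>n. B j)" using \<omega> unfolding B_def by (auto intro!: bexI[of _ j])
  qed (auto simp: B_def)
  have "c * emeasure M {\<omega>\<in>space M. \<exists>k\<le>n. c \<le> N k \<omega>} = (\<Sum>j\<le>n. c * emeasure M (B j))"
    unfolding reach_eq sum_distrib_left[symmetric] using B_disj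
    by (subst sum_emeasure) (auto simp: disjoint_family_on_def)
  also have "\<dots> \<le> (\<Sum>j\<le>n. \<integral>\<^sup>+\<omega>. N j \<omega> * indicator (B j) \<omega> \<partial>M)"
  proof (intro sum_mono)
    fix j
    have "c * emeasure M (B j) = (\<integral>\<^sup>+\<omega>. c * indicator (B j) \<omega> \<partial>M)"
      by (simp add: nn_integral_cmult_indicator)
    also have "\<dots> \<le> (\<integral>\<^sup>+\<omega>. N j \<omega> * indicator (B j) \<omega> \<partial>M)"
      by (intro nn_integral_mono) (auto simp: B_def indicator_def)
    finally show "c * emeasure M (B j) \<le> \<dots>" .
  qed
  also have "\<dots> = (\<Sum>j\<le>n. \<integral>\<^sup>+\<omega>. N n \<omega> * indicator (B j) \<omega> \<partial>M)"
    using B_F by (intro sum.cong refl nn_martingale_nn_integral_indicator[symmetric]) auto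
  also have "\<dots> = (\<integral>\<^sup>+\<omega>. (\<Sum>j\<le>n. N n \<omega> * indicator (B j) \<omega>) \<partial>M)"
    by (intro nn_integral_sum[symmetric]) auto
  also have "\<dots> \<le> (\<integral>\<^sup>+\<omega>. N n \<omega> \<partial>M)"
  proof (intro nn_integral_mono)
    fix \<omega>
    have "(\<Sum>j\<le>n. indicator (B j) \<omega> :: ennreal) = indicator (\<Union>j\<le>n. B j) \<omega>"
      using B_disj by (intro indicator_UN_disjoint[symmetric]) (auto simp: disjoint_family_on_def)
    then have "(\<Sum>j\<le>n. N n \<omega> * indicator (B j) \<omega>) = N n \<omega> * indicator (\<Union>j\<le>n. B j) \<omega>"
      by (simp only: sum_distrib_left[symmetric])
    also have "\<dots> \<le> N n \<omega>"
      by (simp add: indicator_def)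
    finally show "(\<Sum>j\<le>n. N n \<omega> * indicator (B j) \<omega>) \<le> N n \<omega>" .
  qed
  also have "\<dots> = (\<integral>\<^sup>+\<omega>. N 0 \<omega> \<partial>M)"
    by (rule nn_martingale_nn_integral)
  finally show ?thesis .
qed

lemma ville_inequality:
  "c * emeasure M {\<omega>\<in>space M. \<exists>k. c \<le> N k \<omega>} \<le> (\<integral>\<^sup>+\<omega>. N 0 \<omega> \<partial>M)"
proof -
  define C where "C n = {\<omega>\<in>space M. \<exists>k\<le>n. c \<le> N k \<omega>}" for n
  have "C n \<in> sets M" for n
    unfolding C_def by measurable
  then have "range C \<subseteq> sets M"
    by auto
  moreover have "incseq C"
    unfolding C_def by (intro monoI) (auto intro: order_trans)
  moreover have "(\<Union>n. C n) = {\<omega>\<in>space M. \<exists>k. c \<le> N k \<omega>}"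
    unfolding C_def by auto
  ultimately have "emeasure M {\<omega>\<in>space M. \<exists>k. c \<le> N k \<omega>} = (SUP n. emeasure M (C n))"
    using SUP_emeasure_incseq[of C M] by simp
  then have "c * emeasure M {\<omega>\<in>space M. \<exists>k. c \<le> N k \<omega>} = (SUP n. c * emeasure M (C n))"
    by (simp add: SUP_mult_left_ennreal)
  also have "\<dots> \<le> (\<integral>\<^sup>+\<omega>. N 0 \<omega> \<partial>M)"
    using ville_inequality_finite_horizon unfolding C_def by (intro SUP_least) auto
  finally show ?thesis .
qed

end

lemma nn_martingale_suminf:
  fixes c :: "nat \<Rightarrow> ennreal"
  assumes mart: "\<And>j. nn_martingale M F (N j)"
  shows "nn_martingale M F (\<lambda>k \<omega>. \<Sum>j. c j * N j k \<omega>)"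
  unfolding nn_martingale_def
proof (intro conjI allI impI)
  fix k
  show "subalgebra M (F k)" "sets (F k) \<subseteq> sets (F (Suc k))"
    using mart[of 0] by (auto simp: nn_martingale_def)
  show "(\<lambda>\<omega>. \<Sum>j. c j * N j k \<omega>) \<in> borel_measurable (F k)"
    using mart by (intro borel_measurable_suminf_order borel_measurable_times_ennreal)
      (auto simp: nn_martingale_def)
  fix A assume A: "A \<in> sets (F k)"
  then have [measurable]: "A \<in> sets M"
    using \<open>subalgebra M (F k)\<close> by (auto simp: subalgebra_def)
  note nn_martingale_measurable[OF mart, measurable]
  have "(\<integral>\<^sup>+\<omega>. (\<Sum>j. c j * N j n \<omega>) * indicator A \<omega> \<partial>M)
      = (\<Sum>j. c j * (\<integral>\<^sup>+\<omega>. N j n \<omega> * indicator A \<omega> \<partial>M))" for n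
  proof -
    have "(\<integral>\<^sup>+\<omega>. (\<Sum>j. c j * N j n \<omega>) * indicator A \<omega> \<partial>M)
        = (\<integral>\<^sup>+\<omega>. (\<Sum>j. c j * (N j n \<omega> * indicator A \<omega>)) \<partial>M)"
      by (simp add: ennreal_suminf_multc[symmetric] mult.assoc)
    also have "\<dots> = (\<Sum>j. \<integral>\<^sup>+\<omega>. c j * (N j n \<omega> * indicator A \<omega>) \<partial>M)"
      by (rule nn_integral_suminf) measurable
    also have "\<dots> = (\<Sum>j. c j * (\<integral>\<^sup>+\<omega>. N j n \<omega> * indicator A \<omega> \<partial>M))"
      by (subst nn_integral_cmult) auto
    finally show ?thesis .
  qed
  then show "(\<integral>\<^sup>+\<omega>. (\<Sum>j. c j * N j (Suc k) \<omega>) * indicator A \<omega> \<partial>M)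
      = (\<integral>\<^sup>+\<omega>. (\<Sum>j. c j * N j k \<omega>) * indicator A \<omega> \<partial>M)"
    using mart A by (simp add: nn_martingale_def)
qed

lemma AE_nn_martingales_uniformly_small:
  assumes mart: "\<And>n. nn_martingale M F (T n)"
    and lim: "(\<lambda>n. \<integral>\<^sup>+\<omega>. T n 0 \<omega> \<partial>M) \<longlonglongrightarrow> 0"
  shows "AE \<omega> in M. \<forall>\<epsilon>>0. \<exists>n. \<forall>k. T n k \<omega> < ennreal \<epsilon>"
proof -
  note nn_martingale_measurable[OF mart, measurable]
  have "AE \<omega> in M. \<exists>n. \<forall>k. T n k \<omega> < ennreal (inverse (Suc p))" for p :: nat
  proof -
    define c where "c = ennreal (inverse (Suc p))"
    define Bad where "Bad = {\<omega>\<in>space M. \<forall>n. \<exists>k. c \<le> T n k \<omega>}"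
    have [measurable]: "Bad \<in> sets M"
      unfolding Bad_def by measurable
    have "c * emeasure M Bad \<le> (\<integral>\<^sup>+\<omega>. T n 0 \<omega> \<partial>M)" for n
    proof -
      have "c * emeasure M Bad \<le> c * emeasure M {\<omega>\<in>space M. \<exists>k. c \<le> T n k \<omega>}"
        by (intro mult_left_mono emeasure_mono) (auto simp: Bad_def)
      also have "\<dots> \<le> (\<integral>\<^sup>+\<omega>. T n 0 \<omega> \<partial>M)"
        by (rule ville_inequality[OF mart])
      finally show ?thesis .
    qed
    then have "c * emeasure M Bad \<le> 0"
      using lim by (intro LIMSEQ_le_const) auto
    then have "Bad \<in> null_sets M"
      by (auto simp: c_def)
    then show ?thesis
      by (rule AE_I') (auto simp: Bad_def c_def not_less)
  qed
  then have "AE \<omega> in M. \<forall>p::nat. \<exists>n. \<forall>k. T n k \<omega> < ennreal (inverse (Suc p))"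
    by (simp add: AE_all_countable)
  then show ?thesis
  proof (rule AE_mp, intro AE_I2 impI allI)
    fix \<omega> and \<epsilon> :: real
    assume small: "\<forall>p::nat. \<exists>n. \<forall>k. T n k \<omega> < ennreal (inverse (Suc p))" and "0 < \<epsilon>"
    then obtain p where "inverse (Suc p) < \<epsilon>"
      using reals_Archimedean by blast
    then have "ennreal (inverse (Suc p)) \<le> ennreal \<epsilon>"
      by (intro ennreal_leI) simp
    then show "\<exists>n. \<forall>k. T n k \<omega> < ennreal \<epsilon>"
      using small by (meson order_less_le_trans)
  qed
qed

lemma AE_nn_martingale_bounded:
  assumes mart: "nn_martingale M F N"
    and fin: "(\<integral>\<^sup>+\<omega>. N 0 \<omega> \<partial>M) < \<infinity>"
  shows "AE \<omega> in M. \<exists>K::real. \<forall>k. N k \<omega> \<le> ennreal K"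
proof -
  \<comment> \<open>the scaled martingales N / (n + 1) have initial means tending to 0\<close>
  define T where "T n k \<omega> = (\<Sum>j. (if j = 0 then ennreal (inverse (Suc n)) else 0) * N k \<omega>)" for n k \<omega>
  have T_eq: "T n k \<omega> = ennreal (inverse (Suc n)) * N k \<omega>" for n k \<omega>
    unfolding T_def by (subst suminf_finite[of "{0}"]) auto
  have "nn_martingale M F (T n)" for n
    unfolding T_def by (rule nn_martingale_suminf[OF mart])
  moreover have "(\<lambda>n. \<integral>\<^sup>+\<omega>. T n 0 \<omega> \<partial>M) \<longlonglongrightarrow> 0"
  proof -
    have "(\<lambda>n. ennreal (inverse (Suc n)) * (\<integral>\<^sup>+\<omega>. N 0 \<omega> \<partial>M)) \<longlonglongrightarrow> 0 * (\<integral>\<^sup>+\<omega>. N 0 \<omega> \<partial>M)"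
      using fin by (intro tendsto_mult_ennreal tendsto_ennrealI[of _ 0, simplified] LIMSEQ_inverse_real_of_nat) auto
    then show ?thesis
      using nn_martingale_measurable[OF mart] by (simp add: T_eq nn_integral_cmult)
  qed
  ultimately have "AE \<omega> in M. \<forall>\<epsilon>>0. \<exists>n. \<forall>k. T n k \<omega> < ennreal \<epsilon>"
    by (rule AE_nn_martingales_uniformly_small)
  then show ?thesis
  proof (rule AE_mp, intro AE_I2 impI)
    fix \<omega> assume "\<forall>\<epsilon>>0. \<exists>n. \<forall>k. T n k \<omega> < ennreal \<epsilon>"
    then obtain n where n: "\<And>k. ennreal (inverse (Suc n)) * N k \<omega> < 1"
      unfolding T_eq by (metis ennreal_1 zero_less_one)
    have "N k \<omega> \<le> ennreal (Suc n)" for k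
    proof -
      have "ennreal (Suc n) * ennreal (inverse (Suc n)) = ennreal (Suc n * inverse (Suc n))"
        by (rule ennreal_mult[symmetric]) auto
      then have "N k \<omega> = ennreal (Suc n) * (ennreal (inverse (Suc n)) * N k \<omega>)"
        by (simp only: mult.assoc[symmetric]) simp
      also have "\<dots> \<le> ennreal (Suc n) * 1"
        using n[of k] by (intro mult_left_mono) auto
      finally show ?thesis by simp
    qed
    then show "\<exists>K::real. \<forall>k. N k \<omega> \<le> ennreal K" by blast
  qed
qed

section \<open>The posterior as a normalised likelihood ratio\<close>

lemma suminf_tendsto_uniformly_small_tails:
  fixes a :: "nat \<Rightarrow> nat \<Rightarrow> real"
  assumes lim: "\<And>j. (\<lambda>k. a j k) \<longlonglongrightarrow> b j"
    and nonneg: "\<And>j k. 0 \<le> a j k"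
    and summable: "\<And>k. summable (\<lambda>j. a j k)"
    and summable_lim: "summable b"
    and tails: "\<And>\<epsilon>. \<epsilon> > 0 \<Longrightarrow> \<exists>n. \<forall>k. (\<Sum>j. a (j + n) k) < \<epsilon>"
  shows "(\<lambda>k. \<Sum>j. a j k) \<longlonglongrightarrow> (\<Sum>j. b j)"
proof (rule LIMSEQ_I)
  fix \<epsilon> :: real assume "\<epsilon> > 0"
  then obtain n0 where n0: "\<And>k. (\<Sum>j. a (j + n0) k) < \<epsilon> / 3"
    using tails[of "\<epsilon> / 3"] by auto
  obtain n1 where n1: "\<And>n. n \<ge> n1 \<Longrightarrow> norm (\<Sum>j. b (j + n)) < \<epsilon> / 3"
    using suminf_exist_split[OF _ summable_lim, of "\<epsilon> / 3"] \<open>\<epsilon> > 0\<close> by auto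
  define n where "n = max n0 n1"
  have tail_a: "(\<Sum>j. a (j + n) k) < \<epsilon> / 3" for k
  proof -
    have "summable (\<lambda>j. a (j + n0) k)"
      using summable[of k] by (rule summable_ignore_initial_segment)
    then have "(\<Sum>j. a (j + n0) k) = (\<Sum>j. a (j + (n - n0) + n0) k) + (\<Sum>j<n - n0. a (j + n0) k)"
      by (rule suminf_split_initial_segment)
    moreover have "0 \<le> (\<Sum>j<n - n0. a (j + n0) k)"
      using nonneg by (intro sum_nonneg) auto
    moreover have "j + (n - n0) + n0 = j + n" for j
      unfolding n_def by simp
    ultimately show ?thesis
      using n0[of k] by simp
  qed
  have tail_a_nonneg: "0 \<le> (\<Sum>j. a (j + n) k)" for k
    using nonneg summable_ignore_initial_segment[OF summable] by (intro suminf_nonneg) auto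
  have "(\<lambda>k. \<Sum>j<n. a j k) \<longlonglongrightarrow> (\<Sum>j<n. b j)"
    using lim by (intro tendsto_sum)
  then obtain K where K: "\<And>k. k \<ge> K \<Longrightarrow> norm ((\<Sum>j<n. a j k) - (\<Sum>j<n. b j)) < \<epsilon> / 3"
    using LIMSEQ_D[of _ _ "\<epsilon> / 3"] \<open>\<epsilon> > 0\<close> by (metis zero_less_divide_iff zero_less_numeral)
  show "\<exists>K. \<forall>k\<ge>K. norm ((\<Sum>j. a j k) - (\<Sum>j. b j)) < \<epsilon>"
  proof (intro exI allI impI)
    fix k assume "k \<ge> K"
    have "(\<Sum>j. a j k) - (\<Sum>j. b j)
        = ((\<Sum>j<n. a j k) - (\<Sum>j<n. b j)) + (\<Sum>j. a (j + n) k) - (\<Sum>j. b (j + n))"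
      using suminf_split_initial_segment[OF summable[of k], of n]
        suminf_split_initial_segment[OF summable_lim, of n] by simp
    moreover have "norm (\<Sum>j. b (j + n)) < \<epsilon> / 3"
      by (rule n1) (simp add: n_def)
    ultimately show "norm ((\<Sum>j. a j k) - (\<Sum>j. b j)) < \<epsilon>"
      using K[OF \<open>k \<ge> K\<close>] tail_a[of k] tail_a_nonneg[of k]
      by (simp only: real_norm_def abs_less_iff) linarith
  qed
qed

lemma prod_lessThan_tendsto_zero:
  fixes b :: "nat \<Rightarrow> real"
  assumes nonneg: "\<And>i. 0 \<le> b i" and le_1: "\<And>i. b i \<le> 1"
    and r: "strict_mono r" and "\<rho> < 1" and small: "eventually (\<lambda>j. b (r j) \<le> \<rho>) sequentially"
  shows "(\<lambda>n. \<Prod>i<n. b i) \<longlonglongrightarrow> 0"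
proof -
  obtain J where J: "\<And>j. j \<ge> J \<Longrightarrow> b (r j) \<le> \<rho>"
    using small unfolding eventually_sequentially by blast
  define \<rho>' where "\<rho>' = max \<rho> 0"
  have \<rho>': "0 \<le> \<rho>'" "\<rho>' < 1"
    using \<open>\<rho> < 1\<close> unfolding \<rho>'_def by auto
  have bound: "(\<Prod>i<n. b i) \<le> \<rho>' ^ N" if "n \<ge> r (J + N)" for n N
  proof -
    have sub: "r ` {J..<J + N} \<subseteq> {..<n}"
      using that by (auto simp: strict_mono_less[OF r] intro!: less_le_trans[OF _ that])
    have "(\<Prod>i<n. b i) = prod b ({..<n} - r ` {J..<J + N}) * prod b (r ` {J..<J + N})"
      by (rule prod.subset_diff[OF sub]) simp
    also have "\<dots> \<le> 1 * prod b (r ` {J..<J + N})"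
      using nonneg le_1 by (intro mult_right_mono prod_le_1 prod_nonneg) auto
    also have "\<dots> = (\<Prod>j\<in>{J..<J + N}. b (r j))"
      using strict_mono_imp_inj_on[OF r] by (simp add: prod.reindex)
    also have "\<dots> \<le> (\<Prod>j\<in>{J..<J + N}. \<rho>')"
      using J nonneg unfolding \<rho>'_def by (intro prod_mono) fastforce
    finally show ?thesis by simp
  qed
  show ?thesis
  proof (rule LIMSEQ_I)
    fix \<epsilon> :: real assume "\<epsilon> > 0"
    then obtain N where N: "\<rho>' ^ N < \<epsilon>"
      using \<rho>' by (meson LIMSEQ_realpow_zero LIMSEQ_le_const not_le)
    have "norm (\<Prod>i<n. b i) < \<epsilon>" if "n \<ge> r (J + N)" for n
      using bound[OF that] N nonneg by (simp add: prod_nonneg)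
    then show "\<exists>n0. \<forall>n\<ge>n0. norm ((\<Prod>i<n. b i) - 0) < \<epsilon>"
      by auto
  qed
qed

lemma ex_enumeration_summable:
  fixes p :: "'t::countable \<Rightarrow> real"
  assumes "infinite (UNIV :: 't set)" and "(p has_sum s) UNIV"
  obtains e :: "nat \<Rightarrow> 't" where "bij e" "summable (\<lambda>j. p (e j))"
proof
  show bij: "bij (from_nat_into (UNIV :: 't set))"
    using bij_betw_from_nat_into[OF _ assms(1)] by (simp add: bij_def bij_betw_def)
  have "((\<lambda>j. p (from_nat_into UNIV j)) has_sum s) UNIV"
    using has_sum_reindex_bij_betw[of "from_nat_into UNIV" UNIV UNIV p s] bij assms(2) by (simp add: bij_def)
  then show "summable (\<lambda>j. p (from_nat_into UNIV j))"
    by (rule sums_summable[OF has_sum_imp_sums])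
qed

definition likelihood_ratio ::
  "('th \<Rightarrow> 'x \<Rightarrow> 'u \<Rightarrow> 'x \<Rightarrow> real) \<Rightarrow> (nat \<Rightarrow> 'x) \<Rightarrow> (nat \<Rightarrow> 'u) \<Rightarrow> 'th \<Rightarrow> 'th \<Rightarrow> nat \<Rightarrow> real" where
  "likelihood_ratio q xs us t0 t k = (\<Prod>i<k. q t (xs i) (us i) (xs (Suc i)) / q t0 (xs i) (us i) (xs (Suc i)))"

context
  fixes q :: "'th \<Rightarrow> 'x \<Rightarrow> 'u \<Rightarrow> 'x \<Rightarrow> real" and xs :: "nat \<Rightarrow> 'x" and us :: "nat \<Rightarrow> 'u"
    and pi0 :: "'th \<Rightarrow> real" and ts :: 'th
  assumes q_pos: "\<And>t k. 0 < q t (xs k) (us k) (xs (Suc k))"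
    and prior_nonneg: "\<And>t. 0 \<le> pi0 t"
    and prior_pos: "0 < pi0 ts"
begin

lemma likelihood_ratio_pos: "0 < likelihood_ratio q xs us ts t k"
  unfolding likelihood_ratio_def using q_pos by (intro prod_pos divide_pos_pos) auto

lemma likelihood_ratio_self: "likelihood_ratio q xs us ts ts k = 1"
  unfolding likelihood_ratio_def using q_pos[of ts] by (simp add: less_imp_neq[symmetric])

lemma posterior_eq_normalized_likelihood_ratio:
  assumes prior_sum: "(pi0 has_sum 1) UNIV"
    and summable: "\<And>k. (\<lambda>t. pi0 t * likelihood_ratio q xs us ts t k) summable_on UNIV"
  shows "posterior pi0 q xs us k t
           = pi0 t * likelihood_ratio q xs us ts t k / (\<Sum>\<^sub>\<infinity>t'. pi0 t' * likelihood_ratio q xs us ts t' k)"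
proof -
  define a where "a t k = pi0 t * likelihood_ratio q xs us ts t k" for t k
  define S where "S k = (\<Sum>\<^sub>\<infinity>t. a t k)" for k
  have S_pos: "0 < S k" for k
  proof -
    have "sum (\<lambda>t. a t k) {ts} \<le> S k"
      unfolding S_def using summable[of k] prior_nonneg likelihood_ratio_pos
      by (intro finite_sum_le_infsum) (auto simp: a_def less_imp_le)
    then show ?thesis
      using prior_pos by (simp add: a_def likelihood_ratio_self)
  qed
  have "posterior pi0 q xs us k t = a t k / S k" for t
  proof (induction k arbitrary: t)
    case 0
    then show ?case
      using infsumI[OF prior_sum] by (simp add: a_def S_def likelihood_ratio_def)
  next
    case (Suc k)
    define c where "c = q ts (xs k) (us k) (xs (Suc k)) / S k"
    have step: "q t' (xs k) (us k) (xs (Suc k)) * (a t' k / S k) = c * a t' (Suc k)" for t'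
      unfolding a_def c_def likelihood_ratio_def using q_pos[of ts k] S_pos[of k] by (simp add: field_simps)
    have "(\<Sum>\<^sub>\<infinity>t'. q t' (xs k) (us k) (xs (Suc k)) * posterior pi0 q xs us k t')
        = (\<Sum>\<^sub>\<infinity>t'. c * a t' (Suc k))"
      by (simp only: Suc.IH step)
    also have "\<dots> = c * S (Suc k)"
      unfolding S_def by (rule infsum_cmult_right')
    finally have "posterior pi0 q xs us (Suc k) t = c * a t (Suc k) / (c * S (Suc k))"
      by (simp only: posterior.simps Suc.IH step)
    moreover have "c > 0"
      unfolding c_def using q_pos[of ts k] S_pos[of k] by simp
    ultimately show ?case
      by simp
  qed
  then show ?thesis
    unfolding a_def S_def .
qed

lemma posterior_tendsto_indicator:
  fixes e :: "nat \<Rightarrow> 'th"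
  assumes e: "bij e"
    and prior_sum: "(pi0 has_sum 1) UNIV"
    and summable: "\<And>k. summable (\<lambda>j. pi0 (e j) * likelihood_ratio q xs us ts (e j) k)"
    and tails: "\<And>\<epsilon>. \<epsilon> > 0 \<Longrightarrow> \<exists>n. \<forall>k. (\<Sum>j. pi0 (e (j + n)) * likelihood_ratio q xs us ts (e (j + n)) k) < \<epsilon>"
    and vanish: "\<And>t. t \<noteq> ts \<Longrightarrow> (\<lambda>k. likelihood_ratio q xs us ts t k) \<longlonglongrightarrow> 0"
  shows "(\<lambda>k. posterior pi0 q xs us k t) \<longlonglongrightarrow> (if t = ts then 1 else 0)"
proof -
  define a where "a t k = pi0 t * likelihood_ratio q xs us ts t k" for t k
  have a_nonneg: "0 \<le> a t k" for t k
    unfolding a_def by (intro mult_nonneg_nonneg prior_nonneg less_imp_le[OF likelihood_ratio_pos])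
  have sum_eq: "(\<Sum>\<^sub>\<infinity>t. a t k) = (\<Sum>j. a (e j) k)" and summable_on: "(\<lambda>t. a t k) summable_on UNIV" for k
  proof -
    have "((\<lambda>j. a (e j) k) has_sum (\<Sum>j. a (e j) k)) UNIV"
      using summable[of k] a_nonneg
      by (intro norm_summable_imp_has_sum summable_sums) (auto simp: a_def)
    then have "((\<lambda>t. a t k) has_sum (\<Sum>j. a (e j) k)) UNIV"
      using has_sum_reindex_bij_betw[of e UNIV UNIV "\<lambda>t. a t k"] e by (simp add: bij_def)
    then show "(\<Sum>\<^sub>\<infinity>t. a t k) = (\<Sum>j. a (e j) k)" "(\<lambda>t. a t k) summable_on UNIV"
      by (auto intro: infsumI has_sum_imp_summable)
  qed
  obtain j0 where j0: "e j0 = ts"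
    using e by (metis bij_def surj_def)
  have e_eq_ts: "e j = ts \<longleftrightarrow> j = j0" for j
    using e j0 by (metis bij_def injD)
  define b where "b j = (if j = j0 then pi0 ts else 0)" for j
  have "(\<lambda>k. \<Sum>j. a (e j) k) \<longlonglongrightarrow> (\<Sum>j. b j)"
  proof (rule suminf_tendsto_uniformly_small_tails)
    show "(\<lambda>k. a (e j) k) \<longlonglongrightarrow> b j" for j
      using vanish[of "e j"] tendsto_mult_right_zero[where c = "pi0 (e j)"]
      by (cases "j = j0") (auto simp: a_def b_def j0 e_eq_ts likelihood_ratio_self)
    show "summable b"
      unfolding b_def by (rule summable_single)
  qed (use a_nonneg summable tails in \<open>auto simp: a_def\<close>)
  then have "(\<lambda>k. \<Sum>\<^sub>\<infinity>t. a t k) \<longlonglongrightarrow> pi0 ts"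
    using sums_unique[OF sums_single[of j0 "\<lambda>_. pi0 ts"]] by (simp add: sum_eq b_def)
  then have "(\<lambda>k. a t k / (\<Sum>\<^sub>\<infinity>t. a t k)) \<longlonglongrightarrow> (if t = ts then pi0 ts else 0) / pi0 ts"
    using prior_pos vanish[of t] tendsto_mult_right_zero[where c = "pi0 t"]
    by (intro tendsto_divide) (auto simp: a_def likelihood_ratio_self)
  moreover have "(if t = ts then pi0 ts else 0) / pi0 ts = (if t = ts then 1 else 0)"
    using prior_pos by simp
  moreover have "posterior pi0 q xs us k t = a t k / (\<Sum>\<^sub>\<infinity>t. a t k)" for k
    unfolding a_def by (rule posterior_eq_normalized_likelihood_ratio[OF prior_sum summable_on[unfolded a_def]])
  ultimately show ?thesis
    by simp
qed

end

section \<open>Bhattacharyya coefficient and Hellinger distance\<close>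

definition bhattacharyya :: "'x measure \<Rightarrow> ('x \<Rightarrow> real) \<Rightarrow> ('x \<Rightarrow> real) \<Rightarrow> ennreal" where
  "bhattacharyya M p p' = (\<integral>\<^sup>+y. ennreal (sqrt (p y * p' y)) \<partial>M)"

definition hellinger :: "'x measure \<Rightarrow> ('x \<Rightarrow> real) \<Rightarrow> ('x \<Rightarrow> real) \<Rightarrow> ennreal" where
  "hellinger M p p' = (\<integral>\<^sup>+y. ennreal ((sqrt (p y) - sqrt (p' y))\<^sup>2) \<partial>M)"

lemma bhattacharyya_hellinger_sum:
  assumes [measurable]: "p \<in> borel_measurable M" "p' \<in> borel_measurable M"
    and nonneg: "\<And>y. 0 \<le> p y" "\<And>y. 0 \<le> p' y"
  shows "2 * bhattacharyya M p p' + hellinger M p p'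
           = (\<integral>\<^sup>+y. ennreal (p y) \<partial>M) + (\<integral>\<^sup>+y. ennreal (p' y) \<partial>M)"
proof -
  have "ennreal (p y) + ennreal (p' y)
          = 2 * ennreal (sqrt (p y * p' y)) + ennreal ((sqrt (p y) - sqrt (p' y))\<^sup>2)" for y
  proof -
    have "p y + p' y = 2 * sqrt (p y * p' y) + (sqrt (p y) - sqrt (p' y))\<^sup>2"
      using nonneg[of y] by (simp add: power2_eq_square algebra_simps real_sqrt_mult)
    then have "ennreal (p y) + ennreal (p' y)
        = ennreal (2 * sqrt (p y * p' y)) + ennreal ((sqrt (p y) - sqrt (p' y))\<^sup>2)"
      using nonneg[of y] by (simp del: ennreal_plus add: ennreal_plus[symmetric])
    then show ?thesis
      by (simp add: ennreal_mult')
  qed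
  then have "(\<integral>\<^sup>+y. ennreal (p y) \<partial>M) + (\<integral>\<^sup>+y. ennreal (p' y) \<partial>M)
      = (\<integral>\<^sup>+y. 2 * ennreal (sqrt (p y * p' y)) + ennreal ((sqrt (p y) - sqrt (p' y))\<^sup>2) \<partial>M)"
    by (simp add: nn_integral_add[symmetric])
  also have "\<dots> = 2 * bhattacharyya M p p' + hellinger M p p'"
    unfolding bhattacharyya_def hellinger_def by (simp add: nn_integral_add nn_integral_cmult)
  finally show ?thesis ..
qed

context
  fixes M :: "'x measure" and p p' :: "'x \<Rightarrow> real"
  assumes meas [measurable]: "p \<in> borel_measurable M" "p' \<in> borel_measurable M"
    and nonneg: "\<And>y. 0 \<le> p y" "\<And>y. 0 \<le> p' y"
    and density: "(\<integral>\<^sup>+y. ennreal (p y) \<partial>M) = 1" "(\<integral>\<^sup>+y. ennreal (p' y) \<partial>M) = 1"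
begin

lemma bhattacharyya_hellinger_eq_2: "2 * bhattacharyya M p p' + hellinger M p p' = 2"
  using bhattacharyya_hellinger_sum[OF meas nonneg] density by simp

lemma hellinger_le_2: "hellinger M p p' \<le> 2"
  using bhattacharyya_hellinger_eq_2 by (metis add_increasing order_refl zero_le)

lemma bhattacharyya_le_1: "bhattacharyya M p p' \<le> 1"
proof -
  have "2 * bhattacharyya M p p' \<le> 2 * 1"
    using bhattacharyya_hellinger_eq_2 by (metis add_increasing2 mult_1_right order_refl zero_le)
  then show ?thesis
    using ennreal_mult_le_mult_iff[of 2 "bhattacharyya M p p'" 1] by simp
qed

lemma enn2real_bhattacharyya:
  "enn2real (bhattacharyya M p p') = 1 - enn2real (hellinger M p p') / 2"
proof -
  have "2 * bhattacharyya M p p' < \<top>" "hellinger M p p' < \<top>"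
    using bhattacharyya_le_1 hellinger_le_2
    by (auto simp: ennreal_mult_less_top intro: order.strict_trans1)
  then have "enn2real (2 * bhattacharyya M p p' + hellinger M p p')
      = 2 * enn2real (bhattacharyya M p p') + enn2real (hellinger M p p')"
    by (simp add: enn2real_plus enn2real_mult)
  then have "2 * enn2real (bhattacharyya M p p') + enn2real (hellinger M p p') = 2"
    by (simp only: bhattacharyya_hellinger_eq_2) simp
  then show ?thesis
    by simp
qed

end

lemma hellinger_le_liminf:
  fixes P P' :: "nat \<Rightarrow> 'x \<Rightarrow> real"
  assumes [measurable]: "\<And>k. P k \<in> borel_measurable M" "\<And>k. P' k \<in> borel_measurable M"
    and lim: "\<And>y. (\<lambda>k. P k y) \<longlonglongrightarrow> p y" "\<And>y. (\<lambda>k. P' k y) \<longlonglongrightarrow> p' y"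
  shows "hellinger M p p' \<le> liminf (\<lambda>k. hellinger M (P k) (P' k))"
proof -
  have "(\<lambda>k. ennreal ((sqrt (P k y) - sqrt (P' k y))\<^sup>2)) \<longlonglongrightarrow> ennreal ((sqrt (p y) - sqrt (p' y))\<^sup>2)" for y
    using lim by (intro tendsto_ennrealI tendsto_intros)
  then have "hellinger M p p' = (\<integral>\<^sup>+y. liminf (\<lambda>k. ennreal ((sqrt (P k y) - sqrt (P' k y))\<^sup>2)) \<partial>M)"
    unfolding hellinger_def
    by (intro nn_integral_cong lim_imp_Liminf[symmetric]) auto
  also have "\<dots> \<le> liminf (\<lambda>k. hellinger M (P k) (P' k))"
    unfolding hellinger_def by (rule nn_integral_liminf) measurable
  finally show ?thesis .
qed

lemma nn_integral_lborel_pos_if_continuous: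
  fixes h :: "'x::euclidean_space \<Rightarrow> real"
  assumes cont: "continuous_on UNIV h" and nonneg: "\<And>y. 0 \<le> h y" and pos: "0 < h y0"
  shows "0 < (\<integral>\<^sup>+y. ennreal (h y) \<partial>lborel)"
proof -
  obtain d where d: "d > 0" "\<And>y. dist y y0 < d \<Longrightarrow> dist (h y) (h y0) < h y0 / 2"
    using cont pos unfolding continuous_on_iff by (metis UNIV_I half_gt_zero)
  have "0 < measure lborel (ball y0 d)"
    using content_ball_pos[OF d(1)] by simp
  then have "0 < emeasure lborel (ball y0 d)"
    using emeasure_lborel_ball_finite[of y0 d] by (simp add: measure_def enn2real_positive_iff)
  then have "0 < ennreal (h y0 / 2) * emeasure lborel (ball y0 d)"
    using pos by (simp add: ennreal_zero_less_mult_iff)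
  also have "\<dots> = (\<integral>\<^sup>+y. ennreal (h y0 / 2) * indicator (ball y0 d) y \<partial>lborel)"
    by (rule nn_integral_cmult_indicator[symmetric]) simp
  also have "\<dots> \<le> (\<integral>\<^sup>+y. ennreal (h y) \<partial>lborel)"
  proof (intro nn_integral_mono)
    fix y
    have "h y0 / 2 \<le> h y" if "y \<in> ball y0 d"
    proof -
      have "dist y y0 < d"
        using that by (simp add: dist_commute)
      then have "\<bar>h y - h y0\<bar> < h y0 / 2"
        using d(2) by (simp add: dist_real_def)
      then show ?thesis by linarith
    qed
    then show "ennreal (h y0 / 2) * indicator (ball y0 d) y \<le> ennreal (h y)"
      by (simp add: indicator_def ennreal_leI)
  qed
  finally show ?thesis .
qed

section \<open>Blind regions\<close>

lemma ex_nonzero_weights_has_sum_zero: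
  fixes S :: "'t::countable set"
  assumes "t0 \<in> S" "t1 \<in> S" "t0 \<noteq> t1"
  obtains c :: "'t \<Rightarrow> real" where "\<And>t. t \<in> S \<Longrightarrow> c t \<noteq> 0" "(c has_sum 0) S"
proof -
  \<comment> \<open>geometric weights on S - {t0}, balanced by a single negative weight at t0\<close>
  define v :: "'t \<Rightarrow> real" where "v t = (1 / 2) ^ to_nat t" for t
  have "v summable_on UNIV"
  proof -
    have "summable (\<lambda>n::nat. norm ((1 / 2 :: real) ^ n))"
      by (simp add: summable_geometric)
    then have "(\<lambda>n::nat. (1 / 2 :: real) ^ n) summable_on to_nat ` (UNIV :: 't set)"
      by (rule summable_on_subset_banach[OF has_sum_imp_summable[OF norm_summable_imp_has_sum]])
        (auto intro: summable_sums)
    then show ?thesis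
      unfolding v_def using summable_on_reindex[of "to_nat :: 't \<Rightarrow> nat" UNIV "\<lambda>n::nat. (1 / 2 :: real) ^ n"]
      by (simp add: o_def)
  qed
  then have summable: "v summable_on (S - {t0})"
    by (rule summable_on_subset_banach) simp
  define W where "W = infsum v (S - {t0})"
  have "sum v {t1} \<le> W"
    unfolding W_def using summable assms by (intro finite_sum_le_infsum) (auto simp: v_def)
  moreover have "v t1 > 0"
    by (simp add: v_def)
  ultimately have "W > 0"
    by simp
  define c where "c t = (if t = t0 then - W else v t)" for t
  show ?thesis
  proof
    show "c t \<noteq> 0" if "t \<in> S" for t
      using \<open>W > 0\<close> by (simp add: c_def v_def)
    have "(c has_sum W) (S - {t0})"
      using has_sum_infsum[OF summable] unfolding W_def
      by (rule has_sum_cong[THEN iffD2, rotated]) (auto simp: c_def)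
    from has_sum_insert[OF _ this, of t0] show "(c has_sum 0) S"
      using assms by (simp add: c_def insert_absorb)
  qed
qed

definition indistinguishable_from ::
  "('th \<Rightarrow> 'x \<Rightarrow> 'u \<Rightarrow> 'x \<Rightarrow> real) \<Rightarrow> ('x \<times> 'u) set \<Rightarrow> 'th \<Rightarrow> 'th set" where
  "indistinguishable_from q C t0 = {t. \<forall>eta\<in>C. \<forall>x'. q t (fst eta) (snd eta) x' = q t0 (fst eta) (snd eta) x'}"

lemma obs_nondist_indistinguishable_from:
  fixes q :: "'th::countable \<Rightarrow> 'x \<Rightarrow> 'u \<Rightarrow> 'x \<Rightarrow> real"
  assumes "t \<in> indistinguishable_from q C t0" "t \<noteq> t0"
  shows "obs_nondist q C (indistinguishable_from q C t0)"
proof -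
  let ?S = "indistinguishable_from q C t0"
  obtain c :: "'th \<Rightarrow> real" where c: "\<And>t. t \<in> ?S \<Longrightarrow> c t \<noteq> 0" "(c has_sum 0) ?S"
    using ex_nonzero_weights_has_sum_zero[of t0 ?S t] assms
    by (auto simp: indistinguishable_from_def)
  have "((\<lambda>t. c t * q t (fst eta) (snd eta) x') has_sum 0) ?S" if "eta \<in> C" for eta x'
  proof -
    have "((\<lambda>t. c t * q t0 (fst eta) (snd eta) x') has_sum 0 * q t0 (fst eta) (snd eta) x') ?S"
      by (rule has_sum_cmult_left[OF c(2)])
    then have "((\<lambda>t. c t * q t0 (fst eta) (snd eta) x') has_sum 0) ?S"
      by simp
    then show ?thesis
      by (rule has_sum_cong[THEN iffD2, rotated])
        (use that in \<open>auto simp: indistinguishable_from_def\<close>)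
  qed
  then show ?thesis
    unfolding obs_nondist_def using c(1) by blast
qed

lemma not_obs_nondist_insert_distinguishable:
  fixes q :: "'th \<Rightarrow> 'x::euclidean_space \<Rightarrow> 'u \<Rightarrow> 'x \<Rightarrow> real"
  assumes pos: "\<And>t a b x'. 0 < q t a b x'"
    and density: "\<And>t a b. (\<integral>\<^sup>+x'. ennreal (q t a b x') \<partial>lborel) = 1"
    and meas: "\<And>t a b. q t a b \<in> borel_measurable borel"
    and t: "t \<notin> indistinguishable_from q C t0"
  shows "\<not> obs_nondist q C (insert t (indistinguishable_from q C t0))"
proof
  let ?S = "indistinguishable_from q C t0"
  assume "obs_nondist q C (insert t ?S)"
  then obtain c where c_nz: "c t \<noteq> 0"
    and c_sum: "\<And>eta x'. eta \<in> C \<Longrightarrow> ((\<lambda>s. c s * q s (fst eta) (snd eta) x') has_sum 0) (insert t ?S)"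
    unfolding obs_nondist_def by blast
  from t obtain a b x0 where ab: "(a, b) \<in> C" and x0: "q t a b x0 \<noteq> q t0 a b x0"
    unfolding indistinguishable_from_def by auto
  have on_S: "q s a b x' = q t0 a b x'" if "s \<in> ?S" for s x'
    using that ab unfolding indistinguishable_from_def by fastforce
  have "c summable_on ?S"
  proof -
    have "((\<lambda>s. c s * q s a b x0) has_sum 0) (insert t ?S)"
      using c_sum[OF ab, of x0] by simp
    then have "(\<lambda>s. c s * q s a b x0) summable_on ?S"
      by (rule summable_on_subset_banach[OF has_sum_imp_summable]) auto
    then have "(\<lambda>s. c s * q t0 a b x0) summable_on ?S"
      by (rule summable_on_cong[THEN iffD1, rotated]) (simp add: on_S)
    then show ?thesis
      using summable_on_cmult_left'[of "q t0 a b x0" c ?S] pos[of t0 a b x0] by simp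
  qed
  \<comment> \<open>on the context (a, b) the dependence reduces to c t * q t + (\<Sum>s\<in>S. c s) * q t0 = 0,
    so q t is a multiple of q t0, and both integrate to 1\<close>
  define \<mu> where "\<mu> = - infsum c ?S / c t"
  have q_t: "q t a b x' = \<mu> * q t0 a b x'" for x'
  proof -
    have "((\<lambda>s. c s * q s a b x') has_sum infsum c ?S * q t0 a b x') ?S"
      using has_sum_cmult_left[OF has_sum_infsum[OF \<open>c summable_on ?S\<close>]]
      by (rule has_sum_cong[THEN iffD2, rotated]) (simp add: on_S)
    from has_sum_insert[OF t this] have "c t * q t a b x' + infsum c ?S * q t0 a b x' = 0"
      using has_sum_unique c_sum[OF ab, of x'] by fastforce
    then show ?thesis
      unfolding \<mu>_def using c_nz by (simp add: field_simps)
  qed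
  have "\<mu> > 0"
    using q_t[of x0] pos[of t a b x0] pos[of t0 a b x0] by (simp add: zero_less_mult_iff)
  have "ennreal \<mu> = ennreal \<mu> * (\<integral>\<^sup>+x'. ennreal (q t0 a b x') \<partial>lborel)"
    by (simp add: density)
  also have "\<dots> = (\<integral>\<^sup>+x'. ennreal (q t a b x') \<partial>lborel)"
    using meas \<open>\<mu> > 0\<close> pos
    by (simp add: q_t nn_integral_cmult[symmetric] ennreal_mult less_imp_le measurable_lborel1)
  finally have "\<mu> = 1"
    by (simp add: density)
  then show False
    using q_t[of x0] x0 by simp
qed

lemma blind_region_empty_imp_distinguishable:
  fixes q :: "'th::countable \<Rightarrow> 'x::euclidean_space \<Rightarrow> 'u \<Rightarrow> 'x \<Rightarrow> real"
  assumes pos: "\<And>t a b x'. 0 < q t a b x'"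
    and density: "\<And>t a b. (\<integral>\<^sup>+x'. ennreal (q t a b x') \<partial>lborel) = 1"
    and meas: "\<And>t a b. q t a b \<in> borel_measurable borel"
    and empty: "blind_region q C = {}"
    and "t \<noteq> t0"
  shows "\<exists>eta\<in>C. \<exists>x'. q t (fst eta) (snd eta) x' \<noteq> q t0 (fst eta) (snd eta) x'"
proof (rule ccontr)
  assume "\<not> ?thesis"
  then have t: "t \<in> indistinguishable_from q C t0"
    unfolding indistinguishable_from_def by auto
  have t0: "t0 \<in> indistinguishable_from q C t0"
    unfolding indistinguishable_from_def by auto
  have "blind_zone q C (indistinguishable_from q C t0)"
    unfolding blind_zone_def
  proof (intro conjI allI impI)
    show "\<exists>a\<in>indistinguishable_from q C t0. \<exists>b\<in>indistinguishable_from q C t0. a \<noteq> b"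
      using t t0 \<open>t \<noteq> t0\<close> by blast
    show "obs_nondist q C (indistinguishable_from q C t0)"
      by (rule obs_nondist_indistinguishable_from[OF t \<open>t \<noteq> t0\<close>])
    show "\<not> obs_nondist q C (insert s (indistinguishable_from q C t0))"
      if "s \<notin> indistinguishable_from q C t0" for s
      by (rule not_obs_nondist_insert_distinguishable[OF pos density meas that])
  qed
  then show False
    using empty t0 unfolding blind_region_def by blast
qed

section \<open>The closed-loop system\<close>

locale closed_loop_system = prob_space M for M :: "'a measure" +
  fixes x :: "nat \<Rightarrow> 'a \<Rightarrow> 'x::euclidean_space"
    and u :: "nat \<Rightarrow> 'a \<Rightarrow> 'u::polish_space"
    and w :: "nat \<Rightarrow> 'a \<Rightarrow> 'w::euclidean_space"
    and g :: "'w \<Rightarrow> ennreal"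
    and f :: "'x \<Rightarrow> 'u \<Rightarrow> 'w \<Rightarrow> 'th \<Rightarrow> 'x"
    and q :: "'th \<Rightarrow> 'x \<Rightarrow> 'u \<Rightarrow> 'x \<Rightarrow> real"
    and phi :: "nat \<Rightarrow> (nat \<Rightarrow> 'x) \<times> (nat \<Rightarrow> 'u) \<Rightarrow> 'u"
    and th_star :: 'th
  assumes f_meas: "\<And>th. (\<lambda>(xx, uu, ww). f xx uu ww th) \<in> borel_measurable (borel \<Otimes>\<^sub>M borel \<Otimes>\<^sub>M borel)"
    and x0_meas: "x 0 \<in> borel_measurable M"
    and w_dist: "\<And>k. distributed M lborel (w k) g"
    and w_indep: "indep_vars (\<lambda>_. borel) w UNIV"
    and x0_w_indep: "indep_set (sets (vimage_algebra (space M) (x 0) borel))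
                        (sets (vimage_algebra (space M) (\<lambda>\<omega>. \<lambda>k. w k \<omega>) (PiM UNIV (\<lambda>_. borel))))"
    and dyn: "\<And>k \<omega>. x (Suc k) \<omega> = f (x k \<omega>) (u k \<omega>) (w k \<omega>) th_star"
    and phi_meas: "\<And>k. phi k \<in> borel_measurable (PiM {..k} (\<lambda>_. borel) \<Otimes>\<^sub>M PiM {..<k} (\<lambda>_. borel))"
    and policy: "\<And>k \<omega>. u k \<omega> = phi k (restrict (\<lambda>i. x i \<omega>) {..k}, restrict (\<lambda>i. u i \<omega>) {..<k})"
    and q_density: "\<And>th xx uu. distr (density lborel g) lborel (\<lambda>ww. f xx uu ww th)
                                 = density lborel (\<lambda>x'. ennreal (q th xx uu x'))"
    and q_pos: "\<And>th xx uu x'. q th xx uu x' > 0"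
    and q_cont: "\<And>th. continuous_on UNIV (\<lambda>(x', xx, uu). q th xx uu x')"
begin

text \<open>The history up to time k is generated by x 0 (index None) and the noises w j (index Some j), j < k.\<close>

definition source_events :: "nat option \<Rightarrow> 'a set set" where
  "source_events i = (case i of None \<Rightarrow> {x 0 -` A \<inter> space M | A. A \<in> sets borel}
                              | Some j \<Rightarrow> {w j -` A \<inter> space M | A. A \<in> sets borel})"

definition history :: "nat \<Rightarrow> 'a measure" where
  "history k = sigma (space M) (\<Union>i\<in>insert None (Some ` {..<k}). source_events i)"

lemma w_measurable: "w k \<in> borel_measurable M"
  using w_dist[of k] by (auto dest: distributed_measurable)

lemma source_events_sets: "source_events i \<subseteq> sets M"
  using x0_meas w_measurable by (auto simp: source_events_def split: option.splits)

lemma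
  shows sets_history: "sets (history k) = sigma_sets (space M) (\<Union>i\<in>insert None (Some ` {..<k}). source_events i)"
    and space_history: "space (history k) = space M"
  using source_events_sets sets.sets_into_space unfolding history_def by (blast intro!: sets_measure_of space_measure_of)+

lemma subalgebra_history: "subalgebra M (history k)"
  unfolding subalgebra_def space_history sets_history
  using source_events_sets by (intro conjI refl sets.sigma_sets_subset) auto

lemma sets_history_mono: "i \<le> k \<Longrightarrow> sets (history i) \<subseteq> sets (history k)"
  unfolding sets_history by (intro sigma_sets_mono subsetI) auto

lemma measurable_history_mono: "i \<le> k \<Longrightarrow> h \<in> borel_measurable (history i) \<Longrightarrow> h \<in> borel_measurable (history k)"
  using measurable_mono[OF order_refl refl sets_history_mono space_history[of i, folded space_history[of k]]]
  by blast

lemma measurable_historyI: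
  assumes "\<And>A. A \<in> sets borel \<Longrightarrow> h -` A \<inter> space M \<in> (\<Union>i\<in>insert None (Some ` {..<k}). source_events i)"
  shows "h \<in> borel_measurable (history k)"
  by (rule measurableI) (use assms in \<open>auto simp: sets_history space_history intro: sigma_sets.Basic\<close>)

lemma x0_history: "x 0 \<in> borel_measurable (history k)"
  by (rule measurable_historyI) (auto simp: source_events_def)

lemma w_history: "i < k \<Longrightarrow> w i \<in> borel_measurable (history k)"
  by (rule measurable_historyI) (auto simp: source_events_def)

lemma u_history_if_past:
  assumes "\<forall>i\<le>k. x i \<in> borel_measurable (history k)" "\<forall>i<k. u i \<in> borel_measurable (history k)"
  shows "u k \<in> borel_measurable (history k)"
proof -
  have "(\<lambda>\<omega>. (restrict (\<lambda>i. x i \<omega>) {..k}, restrict (\<lambda>i. u i \<omega>) {..<k}))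
      \<in> measurable (history k) (PiM {..k} (\<lambda>_. borel) \<Otimes>\<^sub>M PiM {..<k} (\<lambda>_. borel))"
    using assms by (intro measurable_Pair measurable_restrict) (simp_all add: lessThan_iff atMost_iff)
  from measurable_compose[OF this phi_meas] show ?thesis
    by (simp only: policy[symmetric])
qed

lemma x_u_history: "(\<forall>i\<le>k. x i \<in> borel_measurable (history k)) \<and> (\<forall>i\<le>k. u i \<in> borel_measurable (history k))"
proof (induction k)
  case 0
  then show ?case
    using x0_history u_history_if_past[of 0] by auto
next
  case (Suc k)
  then have xs: "\<forall>i\<le>k. x i \<in> borel_measurable (history (Suc k))"
    and us: "\<forall>i\<le>k. u i \<in> borel_measurable (history (Suc k))"
    using measurable_history_mono[of k "Suc k"] by auto
  have "(\<lambda>\<omega>. (x k \<omega>, u k \<omega>, w k \<omega>)) \<in> measurable (history (Suc k)) (borel \<Otimes>\<^sub>M borel \<Otimes>\<^sub>M borel)"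
    using xs us w_history[of k "Suc k"] by (intro measurable_Pair) auto
  from measurable_compose[OF this f_meas[of th_star]]
  have "x (Suc k) \<in> borel_measurable (history (Suc k))"
    by (simp add: dyn[symmetric])
  with xs have xs': "\<forall>i\<le>Suc k. x i \<in> borel_measurable (history (Suc k))"
    by (auto simp: le_Suc_eq)
  moreover have "u (Suc k) \<in> borel_measurable (history (Suc k))"
    using xs' us by (intro u_history_if_past) (auto simp: less_Suc_eq_le)
  ultimately show ?case
    using us unfolding le_Suc_eq by blast
qed

lemma x_history: "i \<le> k \<Longrightarrow> x i \<in> borel_measurable (history k)"
  and u_history: "i \<le> k \<Longrightarrow> u i \<in> borel_measurable (history k)"
  using x_u_history[of k] by simp_all

lemma Int_stable_source_events: "Int_stable (source_events i)"
proof (cases i)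
  case None
  show ?thesis
    unfolding None Int_stable_def source_events_def option.case
  proof clarsimp
    fix A B :: "'x set" assume "A \<in> sets borel" "B \<in> sets borel"
    then show "\<exists>C. x 0 -` A \<inter> space M \<inter> (x 0 -` B \<inter> space M) = x 0 -` C \<inter> space M \<and> C \<in> sets borel"
      by (intro exI[of _ "A \<inter> B"]) auto
  qed
next
  case (Some j)
  show ?thesis
    unfolding Some Int_stable_def source_events_def option.case
  proof clarsimp
    fix A B :: "'w set" assume "A \<in> sets borel" "B \<in> sets borel"
    then show "\<exists>C. w j -` A \<inter> space M \<inter> (w j -` B \<inter> space M) = w j -` C \<inter> space M \<and> C \<in> sets borel"
      by (intro exI[of _ "A \<inter> B"]) auto
  qed
qed

lemma indep_source_events: "indep_sets source_events UNIV"
proof (rule indep_setsI)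
  fix i show "source_events i \<subseteq> events"
    using source_events_sets by simp
next
  fix A J assume J: "J \<noteq> {}" "finite J" and A: "\<forall>j\<in>J. A j \<in> source_events j"
  define J' where "J' = {i. Some i \<in> J}"
  have "finite J'"
    unfolding J'_def using finite_vimageI[OF J(2), of Some] by (simp add: vimage_def)
  have "\<forall>i\<in>J'. \<exists>B. B \<in> sets borel \<and> A (Some i) = w i -` B \<inter> space M"
    using A unfolding J'_def source_events_def by fastforce
  then obtain B where B: "\<And>i. i \<in> J' \<Longrightarrow> B i \<in> sets borel \<and> A (Some i) = w i -` B i \<inter> space M"
    by metis
  define W where "W = (\<Inter>i\<in>J'. A (Some i))"
  have prob_W: "prob W = (\<Prod>i\<in>J'. prob (A (Some i)))" if "J' \<noteq> {}"
  proof -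
    have "W = (\<Inter>i\<in>J'. w i -` B i \<inter> space M)"
      unfolding W_def using B by auto
    then show ?thesis
      using indep_varsD[OF w_indep that \<open>finite J'\<close>, of B] B by simp
  qed
  have J_eq: "J - {None} = Some ` J'"
  proof (rule set_eqI)
    fix j show "j \<in> J - {None} \<longleftrightarrow> j \<in> Some ` J'"
      unfolding J'_def by (cases j) auto
  qed
  show "prob (\<Inter> (A ` J)) = (\<Prod>j\<in>J. prob (A j))"
  proof (cases "None \<in> J")
    case False
    then have "J = Some ` J'" "J' \<noteq> {}"
      using J_eq J by auto
    then show ?thesis
      using prob_W unfolding W_def by (simp add: prod.reindex image_image)
  next
    case True
    then have J_eq': "J = insert None (Some ` J')"
      using J_eq by auto
    show ?thesis
    proof (cases "J' = {}")
      case True then show ?thesis using J_eq' by simp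
    next
      case False
      \<comment> \<open>x 0 is independent of the whole noise sequence, hence of the cylinder event W\<close>
      have "A None \<in> source_events None"
        using A True by auto
      then obtain B0 where "B0 \<in> sets borel" "A None = x 0 -` B0 \<inter> space M"
        unfolding source_events_def by auto
      then have A0: "A None \<in> sets (vimage_algebra (space M) (x 0) borel)"
        by (auto simp: sets_vimage_algebra)
      define S where "S = (\<Inter>i\<in>J'. (\<lambda>h. h i) -` B i \<inter> space (PiM UNIV (\<lambda>_::nat. borel :: 'w measure)))"
      have "S \<in> sets (PiM UNIV (\<lambda>_. borel))"
        unfolding S_def using B \<open>finite J'\<close> False
        by (intro sets.finite_INT measurable_sets[OF measurable_component_singleton]) auto
      moreover have "W = (\<lambda>\<omega>. \<lambda>k. w k \<omega>) -` S \<inter> space M"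
        unfolding W_def S_def using B False by (auto simp: space_PiM)
      ultimately have "W \<in> sets (vimage_algebra (space M) (\<lambda>\<omega>. \<lambda>k. w k \<omega>) (PiM UNIV (\<lambda>_. borel)))"
        by (auto simp: sets_vimage_algebra)
      moreover have "\<Inter> (A ` J) = A None \<inter> W"
        unfolding J_eq' W_def using False by auto
      ultimately have "prob (\<Inter> (A ` J)) = prob (A None) * prob W"
        using indep_setD[OF x0_w_indep A0] by simp
      then show ?thesis
        unfolding prob_W[OF False] J_eq' using \<open>finite J'\<close>
        by (subst prod.insert) (auto simp: prod.reindex)
    qed
  qed
qed

lemma indep_history_noise:
  assumes A: "A \<in> sets (history k)" and B: "B \<in> sets borel"
  shows "prob (A \<inter> (w k -` B \<inter> space M)) = prob A * prob (w k -` B \<inter> space M)"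
proof -
  define I where "I b = (if b then insert None (Some ` {..<k}) else {Some k})" for b
  have indep: "indep_sets (\<lambda>b. sigma_sets (space M) (\<Union>i\<in>I b. source_events i)) UNIV"
  proof (rule indep_sets_collect_sigma)
    show "indep_sets source_events (\<Union>b\<in>UNIV. I b)"
      using indep_sets_mono_index[OF _ indep_source_events] by simp
    show "disjoint_family_on I UNIV"
      unfolding disjoint_family_on_def I_def by auto
  qed (rule Int_stable_source_events)
  define A' where "A' b = (if b then A else w k -` B \<inter> space M)" for b
  have "A' b \<in> sigma_sets (space M) (\<Union>i\<in>I b. source_events i)" for b
  proof (cases b)
    case True then show ?thesis using A unfolding A'_def I_def sets_history by simp
  next
    case False
    have "w k -` B \<inter> space M \<in> source_events (Some k)"
      using B unfolding source_events_def by auto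
    then show ?thesis using False unfolding A'_def I_def by auto
  qed
  from indep_setsD[OF indep, of UNIV A'] this
  show ?thesis
    unfolding A'_def UNIV_bool by (simp add: Int_commute mult.commute)
qed

abbreviation hist_measure :: "nat \<Rightarrow> 'a measure" where
  "hist_measure k \<equiv> restr_to_subalg M (history k)"

lemma g_measurable: "g \<in> borel_measurable lborel"
  using w_dist[of 0] by (rule distributed_borel_measurable)

lemma distr_noise: "distr M lborel (w k) = density lborel g"
  using w_dist[of k] by (rule distributed_distr_eq_density)

lemma w_measurable_lborel: "w k \<in> measurable M lborel"
  using w_measurable[of k] by (simp add: measurable_lborel2)

lemma prob_space_noise: "prob_space (density lborel g)"
  using prob_space_distr[OF w_measurable_lborel[of 0]] distr_noise[of 0] by simp

lemma sigma_finite_hist_measure: "sigma_finite_measure (hist_measure k)"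
  by (rule finite_measure.sigma_finite_measure[OF finite_measure_restr_to_subalg[OF subalgebra_history]])
     (simp add: finite_measure_axioms)

lemma measurable_pair_noise: "(\<lambda>\<omega>. (\<omega>, w k \<omega>)) \<in> measurable M (hist_measure j \<Otimes>\<^sub>M lborel)"
proof (rule measurable_Pair)
  show "(\<lambda>\<omega>. \<omega>) \<in> measurable M (hist_measure j)"
  proof (rule measurableI)
    fix A assume "A \<in> sets (hist_measure j)"
    then have "A \<in> sets M"
      using subalgebra_history[of j] sets_restr_to_subalg[OF subalgebra_history] by (auto simp: subalgebra_def)
    then show "(\<lambda>\<omega>. \<omega>) -` A \<inter> space M \<in> sets M" by simp
  qed (simp add: space_restr_to_subalg)
  show "w k \<in> measurable M lborel" by (rule w_measurable_lborel)
qed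

lemma distr_history_noise:
  "distr M (hist_measure k \<Otimes>\<^sub>M lborel) (\<lambda>\<omega>. (\<omega>, w k \<omega>)) = hist_measure k \<Otimes>\<^sub>M density lborel g"
proof (rule pair_measure_eqI[symmetric])
  show "sigma_finite_measure (hist_measure k)" by (rule sigma_finite_hist_measure)
  show "sigma_finite_measure (density lborel g)"
    using prob_space_noise by (rule finite_measure.sigma_finite_measure[OF prob_space.finite_measure])
  show "sets (hist_measure k \<Otimes>\<^sub>M density lborel g) = sets (distr M (hist_measure k \<Otimes>\<^sub>M lborel) (\<lambda>\<omega>. (\<omega>, w k \<omega>)))"
    unfolding sets_distr by (rule sets_pair_measure_cong) simp_all
next
  fix A B assume A: "A \<in> sets (hist_measure k)" and B: "B \<in> sets (density lborel g)"
  have A_hist: "A \<in> sets (history k)"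
    using A sets_restr_to_subalg[OF subalgebra_history] by simp
  have A_M: "A \<in> sets M"
    using A_hist subalgebra_history[of k] by (auto simp: subalgebra_def)
  have "A \<times> B \<in> sets (hist_measure k \<Otimes>\<^sub>M lborel)"
    using A B by auto
  then have "emeasure (distr M (hist_measure k \<Otimes>\<^sub>M lborel) (\<lambda>\<omega>. (\<omega>, w k \<omega>))) (A \<times> B)
      = emeasure M ((\<lambda>\<omega>. (\<omega>, w k \<omega>)) -` (A \<times> B) \<inter> space M)"
    by (rule emeasure_distr[OF measurable_pair_noise])
  also have "(\<lambda>\<omega>. (\<omega>, w k \<omega>)) -` (A \<times> B) \<inter> space M = A \<inter> (w k -` B \<inter> space M)"
    using sets.sets_into_space[OF A_M] by auto
  finally have "emeasure (distr M (hist_measure k \<Otimes>\<^sub>M lborel) (\<lambda>\<omega>. (\<omega>, w k \<omega>))) (A \<times> B)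
      = emeasure M (A \<inter> (w k -` B \<inter> space M))" .
  moreover have "emeasure (density lborel g) B = emeasure M (w k -` B \<inter> space M)"
    unfolding distr_noise[of k, symmetric] using B w_measurable_lborel[of k] by (subst emeasure_distr) auto
  moreover have "emeasure (hist_measure k) A = emeasure M A"
    using A_hist by (simp add: emeasure_restr_to_subalg[OF subalgebra_history])
  moreover have "prob (A \<inter> (w k -` B \<inter> space M)) = prob A * prob (w k -` B \<inter> space M)"
    using indep_history_noise[OF A_hist] B by simp
  ultimately show "emeasure (hist_measure k) A * emeasure (density lborel g) B =
      emeasure (distr M (hist_measure k \<Otimes>\<^sub>M lborel) (\<lambda>\<omega>. (\<omega>, w k \<omega>))) (A \<times> B)"
    by (simp add: emeasure_eq_measure ennreal_mult'')
qed

lemma nn_integral_history_noise: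
  assumes H: "H \<in> borel_measurable (hist_measure k \<Otimes>\<^sub>M lborel)"
  shows "(\<integral>\<^sup>+\<omega>. H (\<omega>, w k \<omega>) \<partial>M) = (\<integral>\<^sup>+\<omega>. (\<integral>\<^sup>+v. g v * H (\<omega>, v) \<partial>lborel) \<partial>M)"
proof -
  interpret noise: prob_space "density lborel g"
    by (rule prob_space_noise)
  have eqs: "sets (hist_measure k \<Otimes>\<^sub>M density lborel g) = sets (hist_measure k \<Otimes>\<^sub>M lborel)"
    by (rule sets_pair_measure_cong) simp_all
  have H': "H \<in> borel_measurable (hist_measure k \<Otimes>\<^sub>M density lborel g)"
    using H by (simp only: measurable_cong_sets[OF eqs refl])
  have "(\<integral>\<^sup>+\<omega>. H (\<omega>, w k \<omega>) \<partial>M) = (\<integral>\<^sup>+p. H p \<partial>distr M (hist_measure k \<Otimes>\<^sub>M lborel) (\<lambda>\<omega>. (\<omega>, w k \<omega>)))"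
    using H by (subst nn_integral_distr[OF measurable_pair_noise]) auto
  also have "\<dots> = (\<integral>\<^sup>+\<omega>. (\<integral>\<^sup>+v. H (\<omega>, v) \<partial>density lborel g) \<partial>hist_measure k)"
    using H' by (simp add: distr_history_noise noise.nn_integral_fst)
  also have "\<dots> = (\<integral>\<^sup>+\<omega>. (\<integral>\<^sup>+v. g v * H (\<omega>, v) \<partial>lborel) \<partial>hist_measure k)"
  proof (intro nn_integral_cong)
    fix \<omega> assume "\<omega> \<in> space (hist_measure k)"
    then have "(\<lambda>v. H (\<omega>, v)) \<in> borel_measurable lborel"
      using H by (intro measurable_Pair2) auto
    then show "(\<integral>\<^sup>+v. H (\<omega>, v) \<partial>density lborel g) = (\<integral>\<^sup>+v. g v * H (\<omega>, v) \<partial>lborel)"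
      using g_measurable by (simp add: nn_integral_density)
  qed
  also have "\<dots> = (\<integral>\<^sup>+\<omega>. (\<integral>\<^sup>+v. g v * H (\<omega>, v) \<partial>lborel) \<partial>M)"
  proof (rule nn_integral_subalgebra2[OF subalgebra_history])
    have "(\<lambda>p. g (snd p) * H p) \<in> borel_measurable (hist_measure k \<Otimes>\<^sub>M lborel)"
      using H g_measurable by measurable
    then have "(\<lambda>\<omega>. \<integral>\<^sup>+v. g (snd (\<omega>, v)) * H (\<omega>, v) \<partial>lborel) \<in> borel_measurable (hist_measure k)"
      by (rule lborel.borel_measurable_nn_integral_fst)
    then show "(\<lambda>\<omega>. \<integral>\<^sup>+v. g v * H (\<omega>, v) \<partial>lborel) \<in> borel_measurable (history k)"
      by (intro measurable_in_subalg'[OF subalgebra_history]) simp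
  qed
  finally show ?thesis .
qed

lemma q_continuous: "continuous_on UNIV (q th a b)"
proof -
  have "continuous_on UNIV (\<lambda>x'. (\<lambda>(x', xx, uu). q th xx uu x') (x', a, b))"
    by (rule continuous_on_compose2[OF q_cont[of th]]) (auto intro!: continuous_intros)
  then show ?thesis by simp
qed

lemma q_measurable: "q th a b \<in> borel_measurable borel"
  by (rule borel_measurable_continuous_onI[OF q_continuous])

lemma q_measurable_lborel: "q th a b \<in> borel_measurable lborel"
  using q_measurable by (simp add: measurable_lborel1)

lemma q_measurable_joint:
  "(\<lambda>z::'x \<times> 'u \<times> 'x. q th (fst z) (fst (snd z)) (snd (snd z))) \<in> borel_measurable (borel \<Otimes>\<^sub>M borel \<Otimes>\<^sub>M borel)"
proof -
  have "continuous_on UNIV (\<lambda>z::'x \<times> 'u \<times> 'x. (\<lambda>(x', xx, uu). q th xx uu x') (snd (snd z), fst z, fst (snd z)))"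
    by (rule continuous_on_compose2[OF q_cont[of th]]) (auto intro!: continuous_intros)
  then have "continuous_on UNIV (\<lambda>z::'x \<times> 'u \<times> 'x. q th (fst z) (fst (snd z)) (snd (snd z)))"
    by (simp add: case_prod_beta)
  then have "(\<lambda>z::'x \<times> 'u \<times> 'x. q th (fst z) (fst (snd z)) (snd (snd z))) \<in> borel_measurable borel"
    by (rule borel_measurable_continuous_onI)
  then show ?thesis
    by (simp only: borel_prod)
qed

lemma q_tendsto:
  assumes "(c \<longlongrightarrow> (a, b)) sequentially"
  shows "((\<lambda>k. q t (fst (c k)) (snd (c k)) x') \<longlongrightarrow> q t a b x') sequentially"
proof -
  have "((\<lambda>k. (\<lambda>(x', xx, uu). q t xx uu x') (x', fst (c k), snd (c k))) \<longlongrightarrow> (\<lambda>(x', xx, uu). q t xx uu x') (x', a, b)) sequentially"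
    using tendsto_fst[OF assms] tendsto_snd[OF assms]
    by (intro continuous_on_tendsto_compose[OF q_cont[of t]] tendsto_intros) auto
  then show ?thesis by (simp add: case_prod_beta)
qed

lemma f_measurable: "(\<lambda>v. f a b v th) \<in> measurable lborel lborel"
proof -
  have "(\<lambda>v. (a, b, v)) \<in> measurable (borel :: 'w measure) (borel \<Otimes>\<^sub>M borel \<Otimes>\<^sub>M borel)"
    by (intro measurable_Pair) auto
  from measurable_compose[OF this f_meas[of th]] show ?thesis
    by (simp add: measurable_lborel1 measurable_lborel2)
qed

lemma nn_integral_noise_transition:
  assumes Phi: "Phi \<in> borel_measurable (borel :: 'x measure)"
  shows "(\<integral>\<^sup>+v. g v * Phi (f a b v th) \<partial>lborel) = (\<integral>\<^sup>+x'. ennreal (q th a b x') * Phi x' \<partial>lborel)"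
proof -
  have fm: "(\<lambda>v. f a b v th) \<in> measurable (density lborel g) lborel"
    using f_measurable by (simp add: measurable_cong_sets[OF sets_density refl])
  have "(\<integral>\<^sup>+v. g v * Phi (f a b v th) \<partial>lborel) = (\<integral>\<^sup>+v. Phi (f a b v th) \<partial>density lborel g)"
    using g_measurable Phi f_measurable
    by (subst nn_integral_density) (auto simp: measurable_lborel1 measurable_lborel2)
  also have "\<dots> = (\<integral>\<^sup>+x'. Phi x' \<partial>distr (density lborel g) lborel (\<lambda>v. f a b v th))"
    using Phi fm by (subst nn_integral_distr) auto
  also have "\<dots> = (\<integral>\<^sup>+x'. ennreal (q th a b x') * Phi x' \<partial>lborel)"
    using Phi q_measurable by (simp add: q_density nn_integral_density)
  finally show ?thesis .
qed

lemma nn_integral_q: "(\<integral>\<^sup>+x'. ennreal (q th a b x') \<partial>lborel) = 1"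
proof -
  have "(\<integral>\<^sup>+x'. ennreal (q th a b x') \<partial>lborel) = (\<integral>\<^sup>+v. g v * 1 \<partial>lborel)"
    using nn_integral_noise_transition[of "\<lambda>_. 1" a b th] by simp
  also have "\<dots> = emeasure (density lborel g) (space (density lborel g))"
    using g_measurable by (simp add: emeasure_density)
  also have "\<dots> = 1"
    using prob_space.emeasure_space_1[OF prob_space_noise] by simp
  finally show ?thesis .
qed

text \<open>Since w k is independent of the history up to time k, x (k + 1) has conditional density
  q th_star (x k) (u k) given that history.\<close>

lemma nn_integral_next_state:
  assumes Y: "Y \<in> borel_measurable (history k)"
    and psi: "psi \<in> borel_measurable (borel \<Otimes>\<^sub>M borel \<Otimes>\<^sub>M borel)"
  shows "(\<integral>\<^sup>+\<omega>. Y \<omega> * psi (x k \<omega>, u k \<omega>, x (Suc k) \<omega>) \<partial>M)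
       = (\<integral>\<^sup>+\<omega>. Y \<omega> * (\<integral>\<^sup>+x'. ennreal (q th_star (x k \<omega>) (u k \<omega>) x') * psi (x k \<omega>, u k \<omega>, x') \<partial>lborel) \<partial>M)"
proof -
  define H where "H p = Y (fst p) * psi (x k (fst p), u k (fst p), f (x k (fst p)) (u k (fst p)) (snd p) th_star)" for p
  have Y': "Y \<in> borel_measurable (hist_measure k)"
    by (rule measurable_in_subalg[OF subalgebra_history Y])
  have x1: "(\<lambda>p. x k (fst p)) \<in> borel_measurable (hist_measure k \<Otimes>\<^sub>M (lborel :: 'w measure))"
    by (rule measurable_compose[OF measurable_fst measurable_in_subalg[OF subalgebra_history x_history]]) simp
  have u1: "(\<lambda>p. u k (fst p)) \<in> borel_measurable (hist_measure k \<Otimes>\<^sub>M (lborel :: 'w measure))"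
    by (rule measurable_compose[OF measurable_fst measurable_in_subalg[OF subalgebra_history u_history]]) simp
  have v1: "(\<lambda>p. snd p) \<in> borel_measurable (hist_measure k \<Otimes>\<^sub>M (lborel :: 'w measure))"
    using measurable_snd[of "hist_measure k" "lborel :: 'w measure"] by (simp add: measurable_lborel2)
  have "(\<lambda>p. (x k (fst p), u k (fst p), snd p)) \<in> measurable (hist_measure k \<Otimes>\<^sub>M (lborel :: 'w measure)) (borel \<Otimes>\<^sub>M borel \<Otimes>\<^sub>M borel)"
    using x1 u1 v1 by (intro measurable_Pair) auto
  from measurable_compose[OF this f_meas[of th_star]]
  have "(\<lambda>p. f (x k (fst p)) (u k (fst p)) (snd p) th_star) \<in> borel_measurable (hist_measure k \<Otimes>\<^sub>M (lborel :: 'w measure))"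
    by simp
  then have "(\<lambda>p. (x k (fst p), u k (fst p), f (x k (fst p)) (u k (fst p)) (snd p) th_star))
      \<in> measurable (hist_measure k \<Otimes>\<^sub>M (lborel :: 'w measure)) (borel \<Otimes>\<^sub>M borel \<Otimes>\<^sub>M borel)"
    using x1 u1 by (intro measurable_Pair) auto
  from measurable_compose[OF this psi]
  have "H \<in> borel_measurable (hist_measure k \<Otimes>\<^sub>M (lborel :: 'w measure))"
    unfolding H_def using measurable_compose[OF measurable_fst Y'] by (intro borel_measurable_times_ennreal) auto
  have "(\<integral>\<^sup>+\<omega>. Y \<omega> * psi (x k \<omega>, u k \<omega>, x (Suc k) \<omega>) \<partial>M) = (\<integral>\<^sup>+\<omega>. H (\<omega>, w k \<omega>) \<partial>M)"
    unfolding H_def by (simp add: dyn)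
  also have "\<dots> = (\<integral>\<^sup>+\<omega>. (\<integral>\<^sup>+v. g v * H (\<omega>, v) \<partial>lborel) \<partial>M)"
    by (rule nn_integral_history_noise) fact
  also have "\<dots> = (\<integral>\<^sup>+\<omega>. Y \<omega> * (\<integral>\<^sup>+x'. ennreal (q th_star (x k \<omega>) (u k \<omega>) x') * psi (x k \<omega>, u k \<omega>, x') \<partial>lborel) \<partial>M)"
  proof (intro nn_integral_cong)
    fix \<omega>
    have psi_x': "(\<lambda>x'. psi (x k \<omega>, u k \<omega>, x')) \<in> borel_measurable borel"
      using psi by (intro measurable_compose[OF _ psi] measurable_Pair) auto
    then have "(\<lambda>v. psi (x k \<omega>, u k \<omega>, f (x k \<omega>) (u k \<omega>) v th_star)) \<in> borel_measurable lborel"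
      using measurable_compose[OF f_measurable] by (simp add: measurable_lborel1)
    then have "(\<integral>\<^sup>+v. g v * H (\<omega>, v) \<partial>lborel) = Y \<omega> * (\<integral>\<^sup>+v. g v * psi (x k \<omega>, u k \<omega>, f (x k \<omega>) (u k \<omega>) v th_star) \<partial>lborel)"
      unfolding H_def using g_measurable by (subst nn_integral_cmult[symmetric]) (auto simp: ac_simps)
    also have "\<dots> = Y \<omega> * (\<integral>\<^sup>+x'. ennreal (q th_star (x k \<omega>) (u k \<omega>) x') * psi (x k \<omega>, u k \<omega>, x') \<partial>lborel)"
      by (simp add: nn_integral_noise_transition[OF psi_x'])
    finally show "(\<integral>\<^sup>+v. g v * H (\<omega>, v) \<partial>lborel) = \<dots>" .
  qed
  finally show ?thesis .
qed

definition transition_product :: "('x \<Rightarrow> 'u \<Rightarrow> 'x \<Rightarrow> real) \<Rightarrow> nat \<Rightarrow> 'a \<Rightarrow> real" where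
  "transition_product p k \<omega> = (\<Prod>i<k. p (x i \<omega>) (u i \<omega>) (x (Suc i) \<omega>))"

definition mean_one_factor :: "('x \<Rightarrow> 'u \<Rightarrow> 'x \<Rightarrow> real) \<Rightarrow> bool" where
  "mean_one_factor p \<longleftrightarrow> (\<forall>a b c. 0 \<le> p a b c)
     \<and> (\<lambda>z. p (fst z) (fst (snd z)) (snd (snd z))) \<in> borel_measurable (borel \<Otimes>\<^sub>M borel \<Otimes>\<^sub>M borel)
     \<and> (\<forall>a b. (\<integral>\<^sup>+x'. ennreal (q th_star a b x') * ennreal (p a b x') \<partial>lborel) = 1)"

lemma transition_product_nonneg: "mean_one_factor p \<Longrightarrow> 0 \<le> transition_product p k \<omega>"
  unfolding transition_product_def mean_one_factor_def by (auto intro: prod_nonneg)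

lemma transition_product_history:
  assumes "mean_one_factor p"
  shows "transition_product p k \<in> borel_measurable (history k)"
proof -
  have "(\<lambda>\<omega>. p (x i \<omega>) (u i \<omega>) (x (Suc i) \<omega>)) \<in> borel_measurable (history k)" if "i < k" for i
  proof -
    have "(\<lambda>\<omega>. (x i \<omega>, u i \<omega>, x (Suc i) \<omega>)) \<in> measurable (history k) (borel \<Otimes>\<^sub>M borel \<Otimes>\<^sub>M borel)"
      using that by (intro measurable_Pair x_history u_history) auto
    from measurable_compose[OF this, of "\<lambda>z. p (fst z) (fst (snd z)) (snd (snd z))" borel] assms
    show ?thesis
      unfolding mean_one_factor_def by simp
  qed
  then show ?thesis
    unfolding transition_product_def by (intro borel_measurable_prod) auto
qed

lemma nn_martingale_transition_product:
  assumes p: "mean_one_factor p"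
  shows "nn_martingale M history (\<lambda>k \<omega>. ennreal (transition_product p k \<omega>))"
  unfolding nn_martingale_def
proof (intro conjI allI impI)
  fix k
  show "subalgebra M (history k)" "sets (history k) \<subseteq> sets (history (Suc k))"
    by (simp_all add: subalgebra_history sets_history_mono)
  show "(\<lambda>\<omega>. ennreal (transition_product p k \<omega>)) \<in> borel_measurable (history k)"
    using transition_product_history[OF p] by measurable
  fix A assume A: "A \<in> sets (history k)"
  have nonneg: "\<And>a b c. 0 \<le> p a b c"
    and mean_one: "\<And>a b. (\<integral>\<^sup>+x'. ennreal (q th_star a b x') * ennreal (p a b x') \<partial>lborel) = 1"
    using p unfolding mean_one_factor_def by auto
  define Y where "Y \<omega> = ennreal (transition_product p k \<omega>) * indicator A \<omega>" for \<omega>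
  have Y: "Y \<in> borel_measurable (history k)"
    unfolding Y_def using transition_product_history[OF p] A by (intro borel_measurable_times_ennreal) auto
  have "(\<lambda>z. p (fst z) (fst (snd z)) (snd (snd z))) \<in> borel_measurable (borel \<Otimes>\<^sub>M borel \<Otimes>\<^sub>M borel)"
    using p unfolding mean_one_factor_def by simp
  then have psi: "(\<lambda>z. ennreal (p (fst z) (fst (snd z)) (snd (snd z)))) \<in> borel_measurable (borel \<Otimes>\<^sub>M borel \<Otimes>\<^sub>M borel)"
    by measurable
  have "(\<integral>\<^sup>+\<omega>. ennreal (transition_product p (Suc k) \<omega>) * indicator A \<omega> \<partial>M)
      = (\<integral>\<^sup>+\<omega>. Y \<omega> * (\<lambda>z. ennreal (p (fst z) (fst (snd z)) (snd (snd z)))) (x k \<omega>, u k \<omega>, x (Suc k) \<omega>) \<partial>M)"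
    unfolding Y_def transition_product_def using nonneg
    by (intro nn_integral_cong) (simp add: ennreal_mult' prod_nonneg ac_simps)
  also have "\<dots> = (\<integral>\<^sup>+\<omega>. Y \<omega> * (\<integral>\<^sup>+x'. ennreal (q th_star (x k \<omega>) (u k \<omega>) x') * ennreal (p (x k \<omega>) (u k \<omega>) x') \<partial>lborel) \<partial>M)"
    using nn_integral_next_state[OF Y psi] by simp
  finally show "(\<integral>\<^sup>+\<omega>. ennreal (transition_product p (Suc k) \<omega>) * indicator A \<omega> \<partial>M)
      = (\<integral>\<^sup>+\<omega>. ennreal (transition_product p k \<omega>) * indicator A \<omega> \<partial>M)"
    unfolding Y_def mean_one by simp
qed

lemma nn_integral_transition_product_0: "(\<integral>\<^sup>+\<omega>. ennreal (transition_product p 0 \<omega>) \<partial>M) = 1"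
  by (simp add: transition_product_def emeasure_space_1)

lemma AE_transition_product_bounded:
  assumes p: "mean_one_factor p"
  shows "AE \<omega> in M. \<exists>K::real. \<forall>k. transition_product p k \<omega> \<le> K"
proof -
  have "AE \<omega> in M. \<exists>K::real. \<forall>k. ennreal (transition_product p k \<omega>) \<le> ennreal K"
    using AE_nn_martingale_bounded[OF nn_martingale_transition_product[OF p]]
    by (simp add: nn_integral_transition_product_0)
  then show ?thesis
  proof (rule AE_mp, intro AE_I2 impI)
    fix \<omega> assume "\<exists>K::real. \<forall>k. ennreal (transition_product p k \<omega>) \<le> ennreal K"
    then obtain K where K: "\<And>k. ennreal (transition_product p k \<omega>) \<le> ennreal K"
      by blast
    have "transition_product p k \<omega> \<le> max K 0" for k
    proof -
      have "ennreal (transition_product p k \<omega>) \<le> ennreal (max K 0)"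
        using K[of k] by (cases "K \<ge> 0") (auto simp: max_def ennreal_neg)
      then show ?thesis
        by (subst (asm) ennreal_le_iff) auto
    qed
    then show "\<exists>K::real. \<forall>k. transition_product p k \<omega> \<le> K"
      by blast
  qed
qed

definition bhattacharyya_coeff :: "'th \<Rightarrow> 'x \<Rightarrow> 'u \<Rightarrow> real" where
  "bhattacharyya_coeff t a b = enn2real (bhattacharyya lborel (q t a b) (q th_star a b))"

lemmas q_density_pair =
  q_measurable_lborel q_measurable_lborel less_imp_le[OF q_pos] less_imp_le[OF q_pos] nn_integral_q nn_integral_q

lemma bhattacharyya_q_le_1: "bhattacharyya lborel (q t a b) (q th_star a b) \<le> 1"
  by (rule bhattacharyya_le_1[OF q_density_pair])

lemma hellinger_q_le_2: "hellinger lborel (q t a b) (q th_star a b) \<le> 2"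
  by (rule hellinger_le_2[OF q_density_pair])

lemma bhattacharyya_coeff_eq_hellinger: "bhattacharyya_coeff t a b = 1 - enn2real (hellinger lborel (q t a b) (q th_star a b)) / 2"
  unfolding bhattacharyya_coeff_def by (rule enn2real_bhattacharyya[OF q_density_pair])

lemma bhattacharyya_coeff_pos: "0 < bhattacharyya_coeff t a b"
proof -
  have "0 < bhattacharyya lborel (q t a b) (q th_star a b)"
    unfolding bhattacharyya_def using q_pos
    by (intro nn_integral_lborel_pos_if_continuous[of _ 0] continuous_intros q_continuous)
      (auto intro: less_imp_le)
  then show ?thesis
    using bhattacharyya_q_le_1[of t a b] unfolding bhattacharyya_coeff_def
    by (cases "bhattacharyya lborel (q t a b) (q th_star a b)") (auto simp: top_unique)
qed

lemma bhattacharyya_coeff_le_1: "bhattacharyya_coeff t a b \<le> 1"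
  unfolding bhattacharyya_coeff_eq_hellinger by simp

lemma bhattacharyya_coeff_measurable_joint:
  "(\<lambda>z. bhattacharyya_coeff t (fst z) (fst (snd z))) \<in> borel_measurable (borel \<Otimes>\<^sub>M borel \<Otimes>\<^sub>M (borel :: 'x measure))"
proof -
  define G where "G z = ennreal (sqrt (q t (fst (fst z)) (snd (fst z)) (snd z) * q th_star (fst (fst z)) (snd (fst z)) (snd z)))"
    for z :: "('x \<times> 'u) \<times> 'x"
  have "continuous_on UNIV (\<lambda>z::('x \<times> 'u) \<times> 'x. q s (fst (fst z)) (snd (fst z)) (snd z))" for s
  proof -
    have "continuous_on UNIV (\<lambda>z::('x \<times> 'u) \<times> 'x. (\<lambda>(x', xx, uu). q s xx uu x') (snd z, fst (fst z), snd (fst z)))"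
      by (rule continuous_on_compose2[OF q_cont[of s]]) (auto intro!: continuous_intros)
    then show ?thesis by (simp add: case_prod_beta)
  qed
  then have "(\<lambda>z::('x \<times> 'u) \<times> 'x. sqrt (q t (fst (fst z)) (snd (fst z)) (snd z) * q th_star (fst (fst z)) (snd (fst z)) (snd z)))
      \<in> borel_measurable borel"
    by (intro borel_measurable_continuous_onI continuous_intros)
  then have "G \<in> borel_measurable (borel :: (('x \<times> 'u) \<times> 'x) measure)"
    unfolding G_def by measurable
  then have "G \<in> borel_measurable ((borel :: ('x \<times> 'u) measure) \<Otimes>\<^sub>M lborel)"
  proof -
    have "sets ((borel :: ('x \<times> 'u) measure) \<Otimes>\<^sub>M (lborel :: 'x measure)) = sets (borel \<Otimes>\<^sub>M (borel :: 'x measure))"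
      by (rule sets_pair_measure_cong) simp_all
    also have "\<dots> = sets (borel :: (('x \<times> 'u) \<times> 'x) measure)"
      by (simp only: borel_prod)
    finally have eqs: "sets ((borel :: ('x \<times> 'u) measure) \<Otimes>\<^sub>M (lborel :: 'x measure)) = sets (borel :: (('x \<times> 'u) \<times> 'x) measure)" .
    assume "G \<in> borel_measurable borel"
    then show ?thesis by (simp only: measurable_cong_sets[OF eqs refl])
  qed
  from lborel.borel_measurable_nn_integral_fst[OF this]
  have coeff_pair: "(\<lambda>z::'x \<times> 'u. bhattacharyya_coeff t (fst z) (snd z)) \<in> borel_measurable borel"
    unfolding bhattacharyya_coeff_def bhattacharyya_def G_def by (intro borel_measurable_enn2real) simp
  have "(\<lambda>z::'x \<times> 'u \<times> 'x. (fst z, fst (snd z))) \<in> measurable (borel \<Otimes>\<^sub>M borel \<Otimes>\<^sub>M borel) (borel \<Otimes>\<^sub>M borel)"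
    by measurable
  then have "(\<lambda>z::'x \<times> 'u \<times> 'x. (fst z, fst (snd z))) \<in> measurable (borel \<Otimes>\<^sub>M borel \<Otimes>\<^sub>M borel) borel"
    by (simp only: borel_prod)
  from measurable_compose[OF this coeff_pair] show ?thesis
    by simp
qed

lemma mean_one_factor_likelihood_ratio: "mean_one_factor (\<lambda>a b c. q t a b c / q th_star a b c)"
  unfolding mean_one_factor_def
proof (intro conjI allI)
  show "0 \<le> q t a b c / q th_star a b c" for a b c
    using q_pos[of t a b c] q_pos[of th_star a b c] by simp
  show "(\<lambda>z. q t (fst z) (fst (snd z)) (snd (snd z)) / q th_star (fst z) (fst (snd z)) (snd (snd z)))
      \<in> borel_measurable (borel \<Otimes>\<^sub>M borel \<Otimes>\<^sub>M borel)"
    using q_measurable_joint[of t] q_measurable_joint[of th_star] by (rule borel_measurable_divide)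
  have "ennreal (q th_star a b c) * ennreal (q t a b c / q th_star a b c) = ennreal (q t a b c)" for a b c
    using q_pos[of th_star a b c] q_pos[of t a b c] by (simp add: ennreal_mult[symmetric])
  then show "(\<integral>\<^sup>+x'. ennreal (q th_star a b x') * ennreal (q t a b x' / q th_star a b x') \<partial>lborel) = 1" for a b
    by (simp add: nn_integral_q)
qed

text \<open>This factor splits the likelihood ratio into a martingale part, bounded almost surely,
  and the product of the Bhattacharyya coefficients along the trajectory.\<close>

lemma mean_one_factor_sqrt_likelihood_ratio:
  "mean_one_factor (\<lambda>a b c. sqrt (q t a b c / q th_star a b c) / bhattacharyya_coeff t a b)"
  unfolding mean_one_factor_def
proof (intro conjI allI)
  show "0 \<le> sqrt (q t a b c / q th_star a b c) / bhattacharyya_coeff t a b" for a b c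
    using bhattacharyya_coeff_pos[of t a b] q_pos[of t a b c] q_pos[of th_star a b c] by simp
  show "(\<lambda>z. sqrt (q t (fst z) (fst (snd z)) (snd (snd z)) / q th_star (fst z) (fst (snd z)) (snd (snd z)))
        / bhattacharyya_coeff t (fst z) (fst (snd z))) \<in> borel_measurable (borel \<Otimes>\<^sub>M borel \<Otimes>\<^sub>M borel)"
    using mean_one_factor_likelihood_ratio[of t] bhattacharyya_coeff_measurable_joint[of t] unfolding mean_one_factor_def
    by (intro borel_measurable_divide borel_measurable_sqrt) auto
  fix a b
  have coeff_pos: "bhattacharyya_coeff t a b > 0" by (rule bhattacharyya_coeff_pos)
  have "(\<integral>\<^sup>+x'. ennreal (q th_star a b x') * ennreal (sqrt (q t a b x' / q th_star a b x') / bhattacharyya_coeff t a b) \<partial>lborel)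
      = (\<integral>\<^sup>+x'. ennreal (sqrt (q t a b x' * q th_star a b x')) * ennreal (1 / bhattacharyya_coeff t a b) \<partial>lborel)"
  proof (intro nn_integral_cong)
    fix z
    define A where "A = q t a b z"
    define B where "B = q th_star a b z"
    have A: "A > 0" and B: "B > 0"
      unfolding A_def B_def by (auto intro: q_pos)
    have "B * sqrt (A / B) = (sqrt B * sqrt B) * (sqrt A / sqrt B)"
      using B by (simp add: real_sqrt_divide)
    also have "\<dots> = sqrt A * sqrt B"
      using B by (simp add: field_simps)
    also have "\<dots> = sqrt (A * B)"
      by (simp add: real_sqrt_mult)
    finally have "B * (sqrt (A / B) / bhattacharyya_coeff t a b) = sqrt (A * B) * (1 / bhattacharyya_coeff t a b)"
      by simp
    then show "ennreal (q th_star a b z) * ennreal (sqrt (q t a b z / q th_star a b z) / bhattacharyya_coeff t a b)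
        = ennreal (sqrt (q t a b z * q th_star a b z)) * ennreal (1 / bhattacharyya_coeff t a b)"
      unfolding A_def[symmetric] B_def[symmetric] using A B coeff_pos
      by (simp add: ennreal_mult[symmetric])
  qed
  also have "\<dots> = bhattacharyya lborel (q t a b) (q th_star a b) * ennreal (1 / bhattacharyya_coeff t a b)"
    unfolding bhattacharyya_def using q_measurable_lborel by (intro nn_integral_multc) simp
  also have "\<dots> = ennreal (bhattacharyya_coeff t a b) * ennreal (1 / bhattacharyya_coeff t a b)"
    using bhattacharyya_q_le_1[of t a b] unfolding bhattacharyya_coeff_def
    by (cases "bhattacharyya lborel (q t a b) (q th_star a b)") (auto simp: top_unique)
  also have "\<dots> = 1"
    using coeff_pos by (simp add: ennreal_mult[symmetric])
  finally show "(\<integral>\<^sup>+x'. ennreal (q th_star a b x') * ennreal (sqrt (q t a b x' / q th_star a b x') / bhattacharyya_coeff t a b) \<partial>lborel) = 1" .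
qed

lemma likelihood_ratio_eq_transition_product:
  "likelihood_ratio q (\<lambda>i. x i \<omega>) (\<lambda>i. u i \<omega>) th_star t k
     = transition_product (\<lambda>a b c. q t a b c / q th_star a b c) k \<omega>"
  by (simp add: likelihood_ratio_def transition_product_def)

lemma likelihood_ratio_factorization:
  "likelihood_ratio q (\<lambda>i. x i \<omega>) (\<lambda>i. u i \<omega>) th_star t k
     = (transition_product (\<lambda>a b c. sqrt (q t a b c / q th_star a b c) / bhattacharyya_coeff t a b) k \<omega>
         * (\<Prod>i<k. bhattacharyya_coeff t (x i \<omega>) (u i \<omega>)))\<^sup>2"
proof -
  have split: "q t a b c / q th_star a b c = (sqrt (q t a b c / q th_star a b c) / bhattacharyya_coeff t a b * bhattacharyya_coeff t a b)\<^sup>2" for a b c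
    using bhattacharyya_coeff_pos[of t a b] q_pos[of t a b c] q_pos[of th_star a b c] by simp
  have "likelihood_ratio q (\<lambda>i. x i \<omega>) (\<lambda>i. u i \<omega>) th_star t k
      = (\<Prod>i<k. (sqrt (q t (x i \<omega>) (u i \<omega>) (x (Suc i) \<omega>) / q th_star (x i \<omega>) (u i \<omega>) (x (Suc i) \<omega>))
            / bhattacharyya_coeff t (x i \<omega>) (u i \<omega>) * bhattacharyya_coeff t (x i \<omega>) (u i \<omega>))\<^sup>2)"
    unfolding likelihood_ratio_def by (subst split) (rule refl)
  also have "\<dots> = (\<Prod>i<k. sqrt (q t (x i \<omega>) (u i \<omega>) (x (Suc i) \<omega>) / q th_star (x i \<omega>) (u i \<omega>) (x (Suc i) \<omega>))
            / bhattacharyya_coeff t (x i \<omega>) (u i \<omega>) * bhattacharyya_coeff t (x i \<omega>) (u i \<omega>))\<^sup>2"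
    by (rule prod_power_distrib[symmetric])
  finally show ?thesis
    unfolding transition_product_def by (simp only: prod.distrib)
qed

lemma hellinger_q_pos:
  assumes "q t a b x0 \<noteq> q th_star a b x0"
  shows "0 < hellinger lborel (q t a b) (q th_star a b)"
  unfolding hellinger_def
proof (rule nn_integral_lborel_pos_if_continuous)
  show "continuous_on UNIV (\<lambda>x'. (sqrt (q t a b x') - sqrt (q th_star a b x'))\<^sup>2)"
    by (intro continuous_intros q_continuous)
  have "sqrt (q t a b x0) \<noteq> sqrt (q th_star a b x0)"
    using assms q_pos by auto
  then show "0 < (sqrt (q t a b x0) - sqrt (q th_star a b x0))\<^sup>2"
    by simp
qed simp

text \<open>Lower semicontinuity of the Hellinger distance keeps the Bhattacharyya coefficient
  uniformly below 1 near a context at which q t and q th_star differ.\<close>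

lemma bhattacharyya_coeff_eventually_le:
  assumes c: "c \<longlonglongrightarrow> (a, b)" and ne: "q t a b x0 \<noteq> q th_star a b x0"
  shows "\<exists>\<rho><1. eventually (\<lambda>k. bhattacharyya_coeff t (fst (c k)) (snd (c k)) \<le> \<rho>) sequentially"
proof -
  let ?H = "\<lambda>k. hellinger lborel (q t (fst (c k)) (snd (c k))) (q th_star (fst (c k)) (snd (c k)))"
  have "hellinger lborel (q t a b) (q th_star a b) \<le> liminf ?H"
    using q_measurable_lborel q_tendsto[OF c] by (intro hellinger_le_liminf) auto
  moreover obtain h where h: "hellinger lborel (q t a b) (q th_star a b) = ennreal h" "0 < h"
    using hellinger_q_pos[OF ne] hellinger_q_le_2[of t a b]
    by (cases "hellinger lborel (q t a b) (q th_star a b)") (auto simp: top_unique)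
  moreover have "ennreal (h / 2) < ennreal h"
    using h(2) by (intro ennreal_lessI) auto
  ultimately have "eventually (\<lambda>k. ennreal (h / 2) < ?H k) sequentially"
    by (intro less_LiminfD) simp
  then have "eventually (\<lambda>k. bhattacharyya_coeff t (fst (c k)) (snd (c k)) \<le> 1 - h / 4) sequentially"
  proof eventually_elim
    case (elim k)
    obtain r where r: "?H k = ennreal r" "0 \<le> r"
      using hellinger_q_le_2[of t "fst (c k)" "snd (c k)"] by (cases "?H k") (auto simp: top_unique)
    then have "h / 2 \<le> r"
      using elim h(2) by (simp add: ennreal_less_iff)
    then show ?case
      by (simp add: bhattacharyya_coeff_eq_hellinger r)
  qed
  moreover have "1 - h / 4 < 1"
    using h(2) by simp
  ultimately show ?thesis
    by blast
qed

lemma AE_likelihood_ratio_vanishes: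
  "AE \<omega> in M. \<forall>r c x0. strict_mono r \<and> (\<lambda>k. (x (r k) \<omega>, u (r k) \<omega>)) \<longlonglongrightarrow> c
     \<and> q t (fst c) (snd c) x0 \<noteq> q th_star (fst c) (snd c) x0
     \<longrightarrow> (\<lambda>k. likelihood_ratio q (\<lambda>i. x i \<omega>) (\<lambda>i. u i \<omega>) th_star t k) \<longlonglongrightarrow> 0"
  using AE_transition_product_bounded[OF mean_one_factor_sqrt_likelihood_ratio[of t]]
proof (rule AE_mp, intro AE_I2 impI allI)
  fix \<omega> r c x0
  let ?P = "transition_product (\<lambda>a b c. sqrt (q t a b c / q th_star a b c) / bhattacharyya_coeff t a b)"
  assume "\<exists>K::real. \<forall>k. ?P k \<omega> \<le> K"
  then obtain K where K: "\<And>k. ?P k \<omega> \<le> K"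
    by blast
  assume H: "strict_mono r \<and> (\<lambda>k. (x (r k) \<omega>, u (r k) \<omega>)) \<longlonglongrightarrow> c
    \<and> q t (fst c) (snd c) x0 \<noteq> q th_star (fst c) (snd c) x0"
  then obtain \<rho> where "\<rho> < 1" and small: "eventually (\<lambda>k. bhattacharyya_coeff t (x (r k) \<omega>) (u (r k) \<omega>) \<le> \<rho>) sequentially"
    using bhattacharyya_coeff_eventually_le[of "\<lambda>k. (x (r k) \<omega>, u (r k) \<omega>)" "fst c" "snd c" t x0] by auto
  define B where "B n = (\<Prod>i<n. bhattacharyya_coeff t (x i \<omega>) (u i \<omega>))" for n
  have "B \<longlonglongrightarrow> 0"
    unfolding B_def using bhattacharyya_coeff_pos bhattacharyya_coeff_le_1 H \<open>\<rho> < 1\<close> small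
    by (intro prod_lessThan_tendsto_zero[of _ r \<rho>]) (auto intro: less_imp_le)
  then have bound_lim: "(\<lambda>n. (K * B n)\<^sup>2) \<longlonglongrightarrow> 0"
    by (auto intro: tendsto_eq_intros)
  have B_nonneg: "0 \<le> B n" for n
    unfolding B_def using bhattacharyya_coeff_pos by (intro prod_nonneg) (auto intro: less_imp_le)
  show "(\<lambda>k. likelihood_ratio q (\<lambda>i. x i \<omega>) (\<lambda>i. u i \<omega>) th_star t k) \<longlonglongrightarrow> 0"
  proof (rule tendsto_sandwich[OF _ _ tendsto_const bound_lim])
    show "eventually (\<lambda>n. 0 \<le> likelihood_ratio q (\<lambda>i. x i \<omega>) (\<lambda>i. u i \<omega>) th_star t n) sequentially"
      by (simp add: likelihood_ratio_eq_transition_product transition_product_nonneg[OF mean_one_factor_likelihood_ratio])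
    have "?P n \<omega> * B n \<le> K * B n" for n
      using K B_nonneg by (rule mult_right_mono)
    then have "(?P n \<omega> * B n)\<^sup>2 \<le> (K * B n)\<^sup>2" for n
      using transition_product_nonneg[OF mean_one_factor_sqrt_likelihood_ratio] B_nonneg
      by (intro power_mono) auto
    then show "eventually (\<lambda>n. likelihood_ratio q (\<lambda>i. x i \<omega>) (\<lambda>i. u i \<omega>) th_star t n \<le> (K * B n)\<^sup>2) sequentially"
      by (simp add: likelihood_ratio_factorization B_def)
  qed
qed

lemma nn_martingale_likelihood_ratio_mixture:
  fixes c :: "nat \<Rightarrow> real" and e :: "nat \<Rightarrow> 'th"
  assumes "\<And>j. 0 \<le> c j"
  shows "nn_martingale M history
           (\<lambda>k \<omega>. \<Sum>j. ennreal (c j * likelihood_ratio q (\<lambda>i. x i \<omega>) (\<lambda>i. u i \<omega>) th_star (e j) k))"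
proof -
  have "nn_martingale M history (\<lambda>k \<omega>. \<Sum>j. ennreal (c j)
      * ennreal (transition_product (\<lambda>a b c. q (e j) a b c / q th_star a b c) k \<omega>))"
    by (intro nn_martingale_suminf nn_martingale_transition_product mean_one_factor_likelihood_ratio)
  then show ?thesis
    unfolding likelihood_ratio_eq_transition_product using assms by (simp add: ennreal_mult')
qed

text \<open>The mixture beyond the n-th parameter has the prior tail mass as initial mean, so Ville's
  inequality makes it small uniformly in time.\<close>

lemma AE_prior_mixture_tails:
  fixes pi0 :: "'th \<Rightarrow> real" and e :: "nat \<Rightarrow> 'th"
  assumes nonneg: "\<And>t. 0 \<le> pi0 t" and summable: "summable (\<lambda>j. pi0 (e j))"
  defines "a j k \<omega> \<equiv> pi0 (e j) * likelihood_ratio q (\<lambda>i. x i \<omega>) (\<lambda>i. u i \<omega>) th_star (e j) k"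
  shows "AE \<omega> in M. (\<forall>k. summable (\<lambda>j. a j k \<omega>)) \<and> (\<forall>\<epsilon>>0. \<exists>n. \<forall>k. (\<Sum>j. a (j + n) k \<omega>) < \<epsilon>)"
proof -
  have a_nonneg: "0 \<le> a j k \<omega>" for j k \<omega>
    unfolding a_def likelihood_ratio_eq_transition_product
    using nonneg transition_product_nonneg[OF mean_one_factor_likelihood_ratio] by simp
  define T where "T n k \<omega> = (\<Sum>j. ennreal (a (j + n) k \<omega>))" for n k \<omega>
  have mart: "nn_martingale M history (T n)" for n
    unfolding T_def a_def using nonneg by (intro nn_martingale_likelihood_ratio_mixture)
  have T_0: "T n 0 \<omega> = ennreal (\<Sum>j. pi0 (e (j + n)))" for n \<omega>
    unfolding T_def a_def using nonneg summable_ignore_initial_segment[OF summable]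
    by (simp add: likelihood_ratio_def suminf_ennreal2)
  have "(\<lambda>n. \<integral>\<^sup>+\<omega>. T n 0 \<omega> \<partial>M) \<longlonglongrightarrow> 0"
    unfolding T_0 using suminf_exist_split2[OF summable]
    by (simp add: emeasure_space_1 tendsto_ennrealI[of _ 0, simplified])
  then have "AE \<omega> in M. \<forall>\<epsilon>>0. \<exists>n. \<forall>k. T n k \<omega> < ennreal \<epsilon>"
    by (rule AE_nn_martingales_uniformly_small[OF mart])
  moreover have "AE \<omega> in M. \<exists>K::real. \<forall>k. T 0 k \<omega> \<le> ennreal K"
    using AE_nn_martingale_bounded[OF mart[of 0]] by (simp add: T_0 emeasure_space_1)
  ultimately show ?thesis
  proof (eventually_elim, intro conjI allI impI)
    fix \<omega> assume small: "\<forall>\<epsilon>>0. \<exists>n. \<forall>k. T n k \<omega> < ennreal \<epsilon>"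
      and "\<exists>K::real. \<forall>k. T 0 k \<omega> \<le> ennreal K"
    then obtain K where K: "\<And>k. T 0 k \<omega> \<le> ennreal K"
      by blast
    show summable_a: "summable (\<lambda>j. a j k \<omega>)" for k
    proof (rule summable_suminf_not_top)
      have "T 0 k \<omega> < \<top>"
        using K[of k] by (rule le_less_trans) simp
      then show "(\<Sum>j. ennreal (a j k \<omega>)) \<noteq> \<top>"
        by (simp add: T_def)
    qed (rule a_nonneg)
    fix \<epsilon> :: real assume "\<epsilon> > 0"
    with small obtain n where n: "\<And>k. T n k \<omega> < ennreal \<epsilon>"
      by blast
    have "(\<Sum>j. a (j + n) k \<omega>) < \<epsilon>" for k
    proof -
      have "T n k \<omega> = ennreal (\<Sum>j. a (j + n) k \<omega>)"
        unfolding T_def by (rule suminf_ennreal2[OF a_nonneg summable_ignore_initial_segment[OF summable_a]])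
      moreover have "0 \<le> (\<Sum>j. a (j + n) k \<omega>)"
        by (intro suminf_nonneg summable_ignore_initial_segment[OF summable_a] a_nonneg)
      ultimately show ?thesis
        using n[of k] by (simp add: ennreal_less_iff)
    qed
    then show "\<exists>n. \<forall>k. (\<Sum>j. a (j + n) k \<omega>) < \<epsilon>"
      by blast
  qed
qed

end

theorem mainTheorem4:
  fixes M :: "'a measure"
    and x :: "nat \<Rightarrow> 'a \<Rightarrow> 'x::euclidean_space"
    and u :: "nat \<Rightarrow> 'a \<Rightarrow> 'u::polish_space"
    and w :: "nat \<Rightarrow> 'a \<Rightarrow> 'w::euclidean_space"
    and g :: "'w \<Rightarrow> ennreal"
    and f :: "'x \<Rightarrow> 'u \<Rightarrow> 'w \<Rightarrow> 'th::countable \<Rightarrow> 'x"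
    and q :: "'th \<Rightarrow> 'x \<Rightarrow> 'u \<Rightarrow> 'x \<Rightarrow> real"
    and phi :: "nat \<Rightarrow> (nat \<Rightarrow> 'x) \<times> (nat \<Rightarrow> 'u) \<Rightarrow> 'u"
    and pi0 :: "'th \<Rightarrow> real"
    and th_star :: 'th
  assumes prob: "prob_space M"
    and Theta_infinite: "infinite (UNIV :: 'th set)"
    \<comment> \<open>f Borel measurable\<close>
    and f_meas: "\<And>th. (\<lambda>(xx, uu, ww). f xx uu ww th)
                   \<in> borel_measurable (borel \<Otimes>\<^sub>M borel \<Otimes>\<^sub>M borel)"
    \<comment> \<open>disturbances i.i.d. with density g, independent of the initial state\<close>
    and x0_meas: "x 0 \<in> borel_measurable M"
    and w_dist: "\<And>k. distributed M lborel (w k) g"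
    and w_indep: "prob_space.indep_vars M (\<lambda>_. borel) w UNIV"
    and x0_w_indep: "prob_space.indep_set M
                         (sets (vimage_algebra (space M) (x 0) borel))
                         (sets (vimage_algebra (space M) (\<lambda>\<omega>. \<lambda>k. w k \<omega>) (PiM UNIV (\<lambda>_. borel))))"
    \<comment> \<open>closed-loop dynamics under the true parameter\<close>
    and dyn: "\<And>k \<omega>. x (Suc k) \<omega> = f (x k \<omega>) (u k \<omega>) (w k \<omega>) th_star"
    \<comment> \<open>u_k is a measurable function of (x_0..x_k, u_0..u_(k-1))\<close>
    and phi_meas: "\<And>k. phi k \<in> borel_measurable
                     (PiM {..k} (\<lambda>_. borel) \<Otimes>\<^sub>M PiM {..<k} (\<lambda>_. borel))"
    and policy: "\<And>k \<omega>. u k \<omega> = phi k (restrict (\<lambda>i. x i \<omega>) {..k}, restrict (\<lambda>i. u i \<omega>) {..<k})"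
    \<comment> \<open>q(.; th, x, u) is the density of x_{k+1} given x_k = x, u_k = u under th\<close>
    and q_density: "\<And>th xx uu. distr (density lborel g) lborel (\<lambda>ww. f xx uu ww th)
                                 = density lborel (\<lambda>x'. ennreal (q th xx uu x'))"
    and q_pos: "\<And>th xx uu x'. q th xx uu x' > 0"
    and q_cont: "\<And>th. continuous_on UNIV (\<lambda>(x', xx, uu). q th xx uu x')"
    and q_C1: "\<And>th xx uu. \<exists>D :: 'x \<Rightarrow> 'x \<Rightarrow>\<^sub>L real.
                 (\<forall>x'. (q th xx uu has_derivative blinfun_apply (D x')) (at x'))
                 \<and> continuous_on UNIV D \<and> bounded (range D)"
    \<comment> \<open>prior\<close>
    and prior_nonneg: "\<And>th. pi0 th \<ge> 0"
    and prior_sum: "(pi0 has_sum 1) UNIV"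
    \<comment> \<open>(i)\<close>
    and prior_pos: "pi0 th_star > 0"
    \<comment> \<open>(ii) combinational identifiability along the closed-loop trajectory\<close>
    and ident: "AE \<omega> in M. \<exists>(Ms :: nat set) (r :: nat \<Rightarrow> nat \<Rightarrow> nat) (eta :: nat \<Rightarrow> 'x \<times> 'u).
                   (\<forall>m\<in>Ms. strict_mono (r m) \<and>
                       (\<lambda>k. (x (r m k) \<omega>, u (r m k) \<omega>)) \<longlonglongrightarrow> eta m)
                   \<and> blind_region q (eta ` Ms) = {}"
  shows "AE \<omega> in M. \<forall>th. (\<lambda>k. posterior pi0 q (\<lambda>i. x i \<omega>) (\<lambda>i. u i \<omega>) k th)
                              \<longlonglongrightarrow> (if th = th_star then 1 else 0)"
proof -
  interpret closed_loop_system M x u w g f q phi th_star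
    by (intro closed_loop_system.intro[OF prob] closed_loop_system_axioms.intro) (rule assms; assumption)+
  obtain e :: "nat \<Rightarrow> 'th" where e: "bij e" and summable: "summable (\<lambda>j. pi0 (e j))"
    using ex_enumeration_summable[OF Theta_infinite prior_sum] by blast
  have vanish: "AE \<omega> in M. \<forall>t r c x0. strict_mono r \<and> (\<lambda>k. (x (r k) \<omega>, u (r k) \<omega>)) \<longlonglongrightarrow> c
     \<and> q t (fst c) (snd c) x0 \<noteq> q th_star (fst c) (snd c) x0
     \<longrightarrow> (\<lambda>k. likelihood_ratio q (\<lambda>i. x i \<omega>) (\<lambda>i. u i \<omega>) th_star t k) \<longlonglongrightarrow> 0"
    by (subst AE_all_countable) (intro allI AE_likelihood_ratio_vanishes)
  show ?thesis
    using ident vanish AE_prior_mixture_tails[OF prior_nonneg summable]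
  proof eventually_elim
    case (elim \<omega>)
    from elim(1) show ?case
    proof (elim exE conjE)
      fix Ms r eta
      assume conv: "\<forall>m\<in>Ms. strict_mono (r m) \<and> (\<lambda>k. (x (r m k) \<omega>, u (r m k) \<omega>)) \<longlonglongrightarrow> eta m"
        and empty: "blind_region q (eta ` Ms) = {}"
      have "(\<lambda>k. likelihood_ratio q (\<lambda>i. x i \<omega>) (\<lambda>i. u i \<omega>) th_star t k) \<longlonglongrightarrow> 0" if ne: "t \<noteq> th_star" for t
      proof -
        obtain m x0 where "m \<in> Ms" "q t (fst (eta m)) (snd (eta m)) x0 \<noteq> q th_star (fst (eta m)) (snd (eta m)) x0"
          using blind_region_empty_imp_distinguishable[of q, OF q_pos nn_integral_q q_measurable empty ne] by blast
        with elim(2) conv show ?thesis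
          by blast
      qed
      with elim(3) show ?thesis
        by (intro allI posterior_tendsto_indicator[of q "\<lambda>i. x i \<omega>" "\<lambda>i. u i \<omega>" pi0 th_star e])
          (simp_all add: q_pos prior_nonneg prior_pos e prior_sum)
    qed
  qed
qed

end
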